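(* Let $X$ be a Hilbert space (identified with its dual), and let $\varphi: X\to(-\infty,\infty]$ be a lower semicontinuous, prox-bounded function with $\bar{x}\in\operatorname{dom}\varphi$ and $\bar{v}\in\partial\varphi(\bar{x})$ (limiting subdifferential). Consider: (i) $\varphi$ is variationally convex at $\bar{x}$ for $\bar{v}$; (ii) $\varphi$ is prox-regular at $\bar{x}$ for $\bar{v}$, and the Moreau envelope $e_\lambda\varphi$ is locally convex around $\bar{x}+\lambda\bar{v}$ (convex on some convex neighborhood of $\bar{x}+\lambda\bar{v}$) for all sufficiently small $\lambda>0$. Then (i) $\Rightarrow$ (ii) under these assumptions, and (ii) $\Rightarrow$ (i) if in addition $\varphi$ is weakly sequentially lower semicontinuous around $\bar{x}$.
   Context: Limiting subdifferential: for $\varepsilon\ge0$, $\widehat\partial_\varepsilon\varphi(x):=\{v\in X: \liminf_{y\to x}\frac{\varphi(y)-\varphi(x)-\langle v,y-x\rangle}{\|y-x\|}\ge-\varepsilon\}$; $\partial\varphi(\bar{x})$ is the set of $v$ for which there exist $\varepsilon_k\downarrow0$, $x_k\to\bar{x}$ with $\varphi(x_k)\to\varphi(\bar{x})$, and $v_k\in\widehat\partial_{\varepsilon_k}\varphi(x_k)$ with $v_k\to v$ weakly; for convex functions it is the convex-analysis subdifferential. Variational convexity at $\bar{x}$ for $\bar{v}\in\partial\varphi(\bar x)$: for some convex neighborhood $U\times V$ of $(\bar{x},\bar{v})$ there exist a convex l.s.c. $\widehat\varphi\le\varphi$ on $U$ and $\varepsilon>0$ with $(U_\varepsilon\times V)\cap\operatorname{gph}\partial\varphi=(U\times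 V)\cap\operatorname{gph}\partial\widehat\varphi$ and $\varphi=\widehat\varphi$ at common elements $(x,v)$, where $U_\varepsilon:=\{x\in U:\varphi(x)<\varphi(\bar{x})+\varepsilon\}$. Moreau envelope: $e_\lambda\varphi(x):=\inf_{w\in X}\{\varphi(w)+\frac1{2\lambda}\|w-x\|^2\}$. Prox-bounded: $\varphi(x)\ge\alpha\|x-x_0\|^2+\beta$ for all $x$, for some $\alpha,\beta\in\mathbb{R}$, $x_0\in X$. Prox-regular at $\bar{x}$ for $\bar{v}$: there exist $\varepsilon>0$, $r\ge0$ with $\varphi(x)\ge\varphi(u)+\langle u^*,x-u\rangle-\frac r2\|x-u\|^2$ for all $x$ with $\|x-\bar{x}\|\le\varepsilon$ and all $(u,u^* )\in\operatorname{gph}\partial\varphi$ with $\|u-\bar{x}\|\le\varepsilon$, $\|u^*-\bar{v}\|\le\varepsilon$, $\varphi(u)<\varphi(\bar{x})+\varepsilon$. Weakly sequentially l.s.c. at $x$: $\liminf_k\varphi(x_k)\ge\varphi(x)$ whenever $x_k\to x$ weakly; "around $\bar{x}$" means at every point of a neighborhood of $\bar{x}$. *)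

theory Defs
  imports "HOL-Analysis.Analysis" "HOL-Library.Extended_Real"
begin

definition edom :: "('a \<Rightarrow> ereal) \<Rightarrow> 'a set" where
  "edom f = {x. f x < \<infinity>}"

definition lsc_pt :: "('a::topological_space \<Rightarrow> ereal) \<Rightarrow> 'a \<Rightarrow> bool" where
  "lsc_pt f x \<longleftrightarrow> f x \<le> Liminf (at x) f"

definition lsc_fun :: "('a::topological_space \<Rightarrow> ereal) \<Rightarrow> bool" where
  "lsc_fun f \<longleftrightarrow> (\<forall>x. lsc_pt f x)"

definition weak_conv :: "(nat \<Rightarrow> 'a::real_inner) \<Rightarrow> 'a \<Rightarrow> bool" where
  "weak_conv xs x \<longleftrightarrow> (\<forall>y. (\<lambda>k. inner (xs k) y) \<longlonglongrightarrow> inner x y)"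

definition weakly_seq_lsc_at :: "('a::real_inner \<Rightarrow> ereal) \<Rightarrow> 'a \<Rightarrow> bool" where
  "weakly_seq_lsc_at f x \<longleftrightarrow>
     (\<forall>xs. weak_conv xs x \<longrightarrow> liminf (\<lambda>k. f (xs k)) \<ge> f x)"

definition weakly_seq_lsc_around :: "('a::real_inner \<Rightarrow> ereal) \<Rightarrow> 'a \<Rightarrow> bool" where
  "weakly_seq_lsc_around f x \<longleftrightarrow> (\<exists>W. open W \<and> x \<in> W \<and> (\<forall>y\<in>W. weakly_seq_lsc_at f y))"

definition eps_subdiff :: "('a::real_inner \<Rightarrow> ereal) \<Rightarrow> real \<Rightarrow> 'a \<Rightarrow> 'a set" where
  "eps_subdiff f \<epsilon> x = {v. \<bar>f x\<bar> \<noteq> \<infinity> \<and>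
      Liminf (at x) (\<lambda>y. (f y - f x - ereal (inner v (y - x))) / ereal (norm (y - x)))
        \<ge> - ereal \<epsilon>}"

definition lim_subdiff :: "('a::real_inner \<Rightarrow> ereal) \<Rightarrow> 'a \<Rightarrow> 'a set" where
  "lim_subdiff f x = {v. \<exists>(eps::nat \<Rightarrow> real) xs vs.
      decseq eps \<and> eps \<longlonglongrightarrow> 0 \<and>
      xs \<longlonglongrightarrow> x \<and> (\<lambda>k. f (xs k)) \<longlonglongrightarrow> f x \<and>
      (\<forall>k. vs k \<in> eps_subdiff f (eps k) (xs k)) \<and> weak_conv vs v}"

definition econvex_on :: "'a::real_vector set \<Rightarrow> ('a \<Rightarrow> ereal) \<Rightarrow> bool" where
  "econvex_on S f \<longleftrightarrow> convex S \<and>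
     (\<forall>x\<in>S. \<forall>y\<in>S. \<forall>t::real. 0 < t \<and> t < 1 \<longrightarrow>
        f ((1 - t) *\<^sub>R x + t *\<^sub>R y) \<le> ereal (1 - t) * f x + ereal t * f y)"

definition restr :: "'a set \<Rightarrow> ('a \<Rightarrow> ereal) \<Rightarrow> 'a \<Rightarrow> ereal" where
  "restr U g = (\<lambda>y. if y \<in> U then g y else \<infinity>)"

definition var_convex :: "('a::real_inner \<Rightarrow> ereal) \<Rightarrow> 'a \<Rightarrow> 'a \<Rightarrow> bool" where
  "var_convex f xb vb \<longleftrightarrow>
    (\<exists>U V g \<epsilon>. open U \<and> convex U \<and> xb \<in> U \<and> open V \<and> convex V \<and> vb \<in> V \<and>
       \<epsilon> > 0 \<and>
       econvex_on U g \<and> (\<forall>x\<in>U. lsc_pt (restr U g) x) \<and> (\<forall>x\<in>U. g x \<le> f x) \<and>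
       (\<forall>x v. (x \<in> U \<and> f x < f xb + ereal \<epsilon> \<and> v \<in> V \<and> v \<in> lim_subdiff f x)
           \<longleftrightarrow> (x \<in> U \<and> v \<in> V \<and> v \<in> lim_subdiff (restr U g) x)) \<and>
       (\<forall>x v. x \<in> U \<and> f x < f xb + ereal \<epsilon> \<and> v \<in> V \<and> v \<in> lim_subdiff f x
           \<longrightarrow> f x = g x))"

definition moreau_env :: "real \<Rightarrow> ('a::real_normed_vector \<Rightarrow> ereal) \<Rightarrow> 'a \<Rightarrow> ereal" where
  "moreau_env lam f x = (INF w. f w + ereal (norm (w - x) ^ 2 / (2 * lam)))"

definition prox_bounded :: "('a::real_normed_vector \<Rightarrow> ereal) \<Rightarrow> bool" where
  "prox_bounded f \<longleftrightarrow> (\<exists>\<alpha> \<beta> x0. \<forall>x. f x \<ge> ereal (\<alpha> * norm (x - x0) ^ 2 + \<beta>))"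

definition prox_regular :: "('a::real_inner \<Rightarrow> ereal) \<Rightarrow> 'a \<Rightarrow> 'a \<Rightarrow> bool" where
  "prox_regular f xb vb \<longleftrightarrow>
    (\<exists>\<epsilon>>0. \<exists>r\<ge>0. \<forall>x u us. norm (x - xb) \<le> \<epsilon> \<and> us \<in> lim_subdiff f u \<and>
        norm (u - xb) \<le> \<epsilon> \<and> norm (us - vb) \<le> \<epsilon> \<and> f u < f xb + ereal \<epsilon>
        \<longrightarrow> f x \<ge> f u + ereal (inner us (x - u)) - ereal (r / 2 * norm (x - u) ^ 2))"

definition locally_convex_around :: "('a::real_normed_vector \<Rightarrow> ereal) \<Rightarrow> 'a \<Rightarrow> bool" where
  "locally_convex_around f z \<longleftrightarrow> (\<exists>W. open W \<and> convex W \<and> z \<in> W \<and> econvex_on W f)"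

end

theory Submission
  imports Defs
begin

text \<open>
  (i) \<Longrightarrow> (ii): a convex l.s.c. function psi below phi whose localized subgradient graph
  agrees with that of phi yields the prox-regularity inequality with r = 0. Near
  xb + lam vb the prox points of psi exist (strong convexity of the prox objective, completeness),
  have slopes (z - p)/lam near vb and therefore are prox points of phi as well, so the Moreau
  envelope of phi coincides there with the envelope of psi, which is convex.

  (ii) \<Longrightarrow> (i): for a small fixed lam, prox-regularity and prox-boundedness make every u with a
  localized subgradient us the prox point of u + lam us. Where the envelope is convex, its quadratic
  upper bound through u + lam us turns into an affine lower bound, giving the subgradient inequality
  of convex analysis on the localized graph. The supremum of these affine minorants is the convex
  function required by variational convexity; the envelope being convex, prox points exist (the
  minimizing sequences are Cauchy), and monotonicity of subgradients shows that the minorant has no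
  further subgradients near (xb, vb).
\<close>

section \<open>Weak convergence, lower semicontinuity and subgradients\<close>

lemma norm_le_if_inner_bounded_on_ball:
  fixes v :: "'a::real_inner"
  assumes e: "e > 0" and bnd: "\<forall>y\<in>ball y0 e. \<bar>inner v y\<bar> \<le> n"
  shows "norm v \<le> 4 * n / e"
proof (cases "v = 0")
  case True
  have "0 \<le> n" using bnd e by (metis abs_ge_zero centre_in_ball order_trans)
  then show ?thesis using True e by simp
next
  case False
  define d where "d = (e/2) *\<^sub>R (v /\<^sub>R norm v)"
  have "y0 + d \<in> ball y0 e" using False e by (simp add: d_def dist_norm)
  then have 1: "\<bar>inner v (y0 + d)\<bar> \<le> n" using bnd by blast
  have 2: "\<bar>inner v y0\<bar> \<le> n" using bnd e by simp
  have "inner v d = (e/2) * norm v" using False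
    by (simp add: d_def power2_norm_eq_inner[symmetric] power2_eq_square)
  then have "(e/2) * norm v \<le> 2 * n" using 1 2 by (simp add: inner_add_right)
  then show ?thesis using e by (simp add: field_simps)
qed

text \<open>Uniform boundedness principle: the sets where all the functionals are bounded by n cover
  the space, so by Baire one of them has interior.\<close>
lemma weak_conv_imp_bounded:
  fixes vs :: "nat \<Rightarrow> 'a::{real_inner,complete_space}"
  assumes "weak_conv vs v"
  obtains B where "\<And>k. norm (vs k) \<le> B"
proof -
  define E where "E n = (\<Inter>k. {y::'a. \<bar>inner (vs k) y\<bar> \<le> real n})" for n
  have closed: "closed (E n)" for n
    unfolding E_def by (intro closed_INT ballI closed_Collect_le continuous_intros)
  have cover: "(\<Union>n. E n) = UNIV"
  proof safe
    fix y :: 'a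
    have "(\<lambda>k. inner (vs k) y) \<longlonglongrightarrow> inner v y" using assms by (simp add: weak_conv_def)
    then obtain b where b: "\<And>k. \<bar>inner (vs k) y\<bar> \<le> b"
      using convergent_imp_bounded by (fastforce simp: bounded_iff)
    obtain n :: nat where "b \<le> real n" using real_arch_simple by blast
    with b have "y \<in> E n" by (auto simp: E_def intro: order_trans)
    then show "y \<in> (\<Union>n. E n)" by blast
  qed simp
  have "\<exists>n. interior (E n) \<noteq> {}"
  proof (rule ccontr)
    assume "\<not> ?thesis"
    then have "euclidean interior_of \<Union>(range E) = {}"
      by (intro Baire_category_alt) (auto simp: completely_metrizable_space_euclidean closed)
    then show False using cover by simp
  qed
  then obtain n y0 where "y0 \<in> interior (E n)" by blast
  then obtain e where "e > 0" "ball y0 e \<subseteq> E n"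
    by (meson open_contains_ball open_interior interior_subset subset_trans)
  then have "norm (vs k) \<le> 4 * real n / e" for k
    by (intro norm_le_if_inner_bounded_on_ball) (auto simp: E_def)
  then show thesis by (rule that)
qed

lemma weak_conv_inner_tendsto:
  fixes vs :: "nat \<Rightarrow> 'a::{real_inner,complete_space}"
  assumes "weak_conv vs v" "xs \<longlonglongrightarrow> x"
  shows "(\<lambda>k. inner (vs k) (y - xs k)) \<longlonglongrightarrow> inner v (y - x)"
proof -
  obtain B where B: "\<And>k. norm (vs k) \<le> B" using weak_conv_imp_bounded[OF assms(1)] by blast
  have "(\<lambda>k. inner (vs k) (x - xs k)) \<longlonglongrightarrow> 0"
  proof (rule Lim_null_comparison)
    show "\<forall>\<^sub>F k in sequentially. norm (inner (vs k) (x - xs k)) \<le> B * norm (x - xs k)"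
      proof (intro always_eventually allI)
      fix k
      have "norm (vs k) * norm (x - xs k) \<le> B * norm (x - xs k)"
        using B[of k] by (intro mult_right_mono) auto
      then show "norm (inner (vs k) (x - xs k)) \<le> B * norm (x - xs k)"
        using Cauchy_Schwarz_ineq2[of "vs k" "x - xs k"] by simp
    qed
    have "(\<lambda>k. x - xs k) \<longlonglongrightarrow> 0" using tendsto_diff[OF tendsto_const assms(2), of x] by simp
    then show "(\<lambda>k. B * norm (x - xs k)) \<longlonglongrightarrow> 0" by (intro tendsto_mult_right_zero tendsto_norm_zero)
  qed
  moreover have "(\<lambda>k. inner (vs k) (y - x)) \<longlonglongrightarrow> inner v (y - x)"
    using assms(1) by (simp add: weak_conv_def)
  ultimately have "(\<lambda>k. inner (vs k) (y - x) + inner (vs k) (x - xs k)) \<longlonglongrightarrow> inner v (y - x) + 0"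
    by (intro tendsto_add)
  then show ?thesis by (simp add: inner_diff_right)
qed

lemma lsc_pt_le_lim:
  fixes h :: "'a::metric_space \<Rightarrow> ereal"
  assumes "lsc_pt h p" "w \<longlonglongrightarrow> p" "(\<lambda>n. h (w n)) \<longlonglongrightarrow> L"
  shows "h p \<le> L"
proof (rule dense_le)
  fix y assume y: "y < h p"
  then have "eventually (\<lambda>x. y < h x) (at p)"
    using assms(1) le_Liminf_iff unfolding lsc_pt_def by fastforce
  then have "eventually (\<lambda>x. y < h x) (nhds p)"
    using y unfolding eventually_at_filter by (auto elim: eventually_mono)
  then have "eventually (\<lambda>n. y < h (w n)) sequentially"
    using filterlim_iff[THEN iffD1, OF assms(2)] by blast
  then show "y \<le> L"
    using assms(3) by (intro tendsto_lowerbound[where F=sequentially]) (auto elim: eventually_mono)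
qed

lemma eps_subdiff_zero_imp_lim_subdiff:
  assumes "v \<in> eps_subdiff f 0 x"
  shows "v \<in> lim_subdiff f x"
  using assms unfolding lim_subdiff_def
  by (intro CollectI exI[of _ "\<lambda>_. 0"] exI[of _ "\<lambda>_. x"] exI[of _ "\<lambda>_. v"])
     (auto simp: weak_conv_def decseq_def)

lemma eps_subdiff_zero_if_quadratic_minorant:
  fixes f :: "'a::real_inner \<Rightarrow> ereal"
  assumes fx: "f x = ereal a" and N: "open N" "x \<in> N" and c: "c \<ge> 0"
    and minorant: "\<forall>y\<in>N. f y \<ge> ereal (a + inner v (y - x) - c * norm (y - x)^2)"
  shows "v \<in> eps_subdiff f 0 x"
proof -
  define Q where "Q y = (f y - f x - ereal (inner v (y - x))) / ereal (norm (y - x))" for y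
  have Q_ge: "Q y \<ge> ereal (- c * norm (y - x))" if "y \<in> N" "y \<noteq> x" for y
  proof (cases "f y")
    case (real t)
    have "t \<ge> a + inner v (y - x) - c * norm (y - x)^2" using minorant that real by auto
    then show ?thesis using that real by (simp add: Q_def fx field_simps power2_eq_square)
  qed (use minorant that in \<open>auto simp: Q_def fx\<close>)
  have "\<forall>\<^sub>F y in at x. y \<in> N \<and> y \<noteq> x"
    using eventually_at_in_open'[OF N] eventually_neq_at_within by (rule eventually_conj)
  then have "\<forall>\<^sub>F y in at x. ereal (- c * norm (y - x)) \<le> Q y"
    by eventually_elim (blast intro: Q_ge)
  moreover have "((\<lambda>y. ereal (- c * norm (y - x))) \<longlongrightarrow> ereal 0) (at x)"
    by (intro tendsto_ereal tendsto_eq_intros) auto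
  ultimately have "Liminf (at x) Q \<ge> - ereal 0"
    unfolding le_Liminf_iff
  proof (intro allI impI)
    fix b assume "b < - ereal 0"
    then have "\<forall>\<^sub>F y in at x. b < ereal (- c * norm (y - x))"
      using \<open>(_ \<longlongrightarrow> ereal 0) (at x)\<close> by (intro order_tendstoD(1)) auto
    with \<open>\<forall>\<^sub>F y in at x. _ \<le> Q y\<close> show "\<forall>\<^sub>F y in at x. b < Q y"
      by eventually_elim (rule less_le_trans)
  qed
  then show ?thesis using fx unfolding eps_subdiff_def Q_def by simp
qed


lemma filterlim_segment_at_right:
  fixes x d :: "'a::real_normed_vector"
  assumes "d \<noteq> 0"
  shows "filterlim (\<lambda>t. x + t *\<^sub>R d) (at x) (at_right 0)"
proof -
  have "((\<lambda>t. x + t *\<^sub>R d) \<longlongrightarrow> x + 0 *\<^sub>R d) (at_right 0)"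
    by (intro tendsto_intros)
  moreover have "\<forall>\<^sub>F t in at_right (0::real). x + t *\<^sub>R d \<noteq> x"
    using assms by (auto simp: eventually_at_right_field intro!: exI[of _ 1])
  ultimately show ?thesis by (auto simp: filterlim_at)
qed

lemma eps_subdiff_convex_lower_bound:
  fixes h :: "'a::real_inner \<Rightarrow> ereal"
  assumes cv: "econvex_on UNIV h" and hx: "h x = ereal a" and v: "v \<in> eps_subdiff h e x"
    and w: "w < - e"
  shows "h y \<ge> ereal (a + inner v (y - x) + w * norm (y - x))"
proof (cases "y = x \<or> h y = \<infinity>")
  case True
  then show ?thesis using hx by auto
next
  case False
  define d where "d = y - x"
  have nd: "norm d > 0" using False by (simp add: d_def)
  define Q where "Q z = (h z - h x - ereal (inner v (z - x))) / ereal (norm (z - x))" for z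
  have segment: "filterlim (\<lambda>t. x + t *\<^sub>R d) (at x) (at_right 0)"
    using nd by (intro filterlim_segment_at_right) auto
  have "\<forall>\<^sub>F z in at x. ereal w < Q z"
    using v w unfolding eps_subdiff_def le_Liminf_iff Q_def by auto
  then have "\<forall>\<^sub>F t in at_right 0. ereal w < Q (x + t *\<^sub>R d)"
    using filterlim_iff[THEN iffD1, OF segment] by blast
  moreover have "\<forall>\<^sub>F t in at_right 0. 0 < t \<and> t < (1::real)"
    by (auto simp: eventually_at_right_field intro!: exI[of _ 1])
  ultimately have "\<forall>\<^sub>F t in at_right 0. ereal w < Q (x + t *\<^sub>R d) \<and> 0 < t \<and> t < (1::real)"
    by (rule eventually_conj)
  then obtain t where t: "ereal w < Q (x + t *\<^sub>R d)" "0 < t" "t < 1"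
    using eventually_happens[of _ "at_right (0::real)"] by auto
  have "x + t *\<^sub>R d = (1 - t) *\<^sub>R x + t *\<^sub>R y" by (simp add: d_def algebra_simps)
  moreover have "h ((1 - t) *\<^sub>R x + t *\<^sub>R y) \<le> ereal (1 - t) * h x + ereal t * h y"
    using cv t unfolding econvex_on_def by blast
  ultimately have conv: "h (x + t *\<^sub>R d) \<le> ereal ((1 - t) * a) + ereal t * h y"
    using hx by simp
  have "h (x + t *\<^sub>R d) \<noteq> - \<infinity>"
  proof
    assume "h (x + t *\<^sub>R d) = - \<infinity>"
    then have "Q (x + t *\<^sub>R d) = - \<infinity>" using t nd by (simp add: Q_def hx)
    then show False using t(1) by simp
  qed
  moreover have "h y \<noteq> - \<infinity>"
  proof
    assume "h y = - \<infinity>"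
    then have "ereal ((1 - t) * a) + ereal t * h y = - \<infinity>" using t by simp
    then show False using conv \<open>h (x + t *\<^sub>R d) \<noteq> - \<infinity>\<close> by (metis ereal_infty_less_eq(2))
  qed
  ultimately obtain b r where b: "h y = ereal b" and r: "h (x + t *\<^sub>R d) = ereal r"
    using False conv by (cases "h y"; cases "h (x + t *\<^sub>R d)") auto
  have "Q (x + t *\<^sub>R d) = ereal ((r - a - t * inner v d) / (t * norm d))"
    using r hx t nd by (simp add: Q_def)
  then have "w < (r - a - t * inner v d) / (t * norm d)" using t(1) by simp
  then have "w * (t * norm d) < r - a - t * inner v d"
    using t nd by (simp add: pos_less_divide_eq)
  also have "\<dots> \<le> t * (b - a - inner v d)" using conv r b by (simp add: algebra_simps)
  finally have "t * (w * norm d) < t * (b - a - inner v d)" by (simp add: algebra_simps)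
  then have "w * norm d < b - a - inner v d" using t(2) by simp
  then show ?thesis using b by (simp add: d_def)
qed

lemma eps_subdiff_convex_minorant:
  fixes h :: "'a::real_inner \<Rightarrow> ereal"
  assumes cv: "econvex_on UNIV h" and v: "v \<in> eps_subdiff h e x"
  obtains a where "h x = ereal a" "\<And>y. h y \<ge> ereal (a + inner v (y - x) - e * norm (y - x))"
proof -
  from v obtain a where a: "h x = ereal a" unfolding eps_subdiff_def by (cases "h x") auto
  have "h y \<ge> ereal (a + inner v (y - x) - e * norm (y - x))" for y
  proof (cases "h y")
    case (real b)
    have bound: "w * norm (y - x) \<le> b - a - inner v (y - x)" if "w < - e" for w
      using eps_subdiff_convex_lower_bound[OF cv a v that, of y] real by simp
    have "- e * norm (y - x) \<le> b - a - inner v (y - x)"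
    proof (cases "y = x")
      case False
      have "- e \<le> (b - a - inner v (y - x)) / norm (y - x)"
      proof (rule dense_le_bounded[of "- e - 1"])
        fix w assume "- e - 1 < w" "w < - e"
        then show "w \<le> (b - a - inner v (y - x)) / norm (y - x)"
          using bound[of w] False by (simp add: pos_le_divide_eq)
      qed simp
      then show ?thesis using False by (simp add: pos_le_divide_eq)
    qed (use bound[of "- e - 1"] in simp)
    then show ?thesis using real by simp
  next
    case MInf
    then show ?thesis using eps_subdiff_convex_lower_bound[OF cv a v, of "- e - 1" y] by simp
  qed simp
  then show thesis using that a by blast
qed

lemma lim_subdiff_convex_minorant:
  fixes h :: "'a::{real_inner,complete_space} \<Rightarrow> ereal"
  assumes cv: "econvex_on UNIV h" and v: "v \<in> lim_subdiff h x"
  obtains a where "h x = ereal a" "\<And>y. h y \<ge> ereal (a + inner v (y - x))"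
proof -
  from v obtain eps :: "nat \<Rightarrow> real" and xs vs where
    eps: "eps \<longlonglongrightarrow> 0" and xs: "xs \<longlonglongrightarrow> x" and hxs: "(\<lambda>k. h (xs k)) \<longlonglongrightarrow> h x"
    and vs: "\<And>k. vs k \<in> eps_subdiff h (eps k) (xs k)" and weak: "weak_conv vs v"
    unfolding lim_subdiff_def by blast
  define A where "A k = real_of_ereal (h (xs k))" for k
  define s where "s k y = inner (vs k) (y - xs k) - eps k * norm (y - xs k)" for k y
  have hA: "h (xs k) = ereal (A k)" for k
    using eps_subdiff_convex_minorant[OF cv vs[of k]] by (metis A_def real_of_ereal.simps(1))
  have ineq: "h y \<ge> ereal (A k + s k y)" for k y
  proof -
    obtain a' where "h (xs k) = ereal a'" "\<And>y. h y \<ge> ereal (a' + inner (vs k) (y - xs k) - eps k * norm (y - xs k))"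
      using eps_subdiff_convex_minorant[OF cv vs[of k]] by blast
    then show ?thesis using hA[of k] by (simp add: s_def add_diff_eq)
  qed
  have s_lim: "(\<lambda>k. s k y) \<longlonglongrightarrow> inner v (y - x) - 0 * norm (y - x)" for y
  proof -
    have "(\<lambda>k. eps k * norm (y - xs k)) \<longlonglongrightarrow> 0 * norm (y - x)"
      using eps xs by (intro tendsto_intros)
    then show ?thesis unfolding s_def by (rule tendsto_diff[OF weak_conv_inner_tendsto[OF weak xs]])
  qed
  have "h x \<le> ereal (A 0 - inner v (xs 0 - x))"
  proof (rule tendsto_le[OF trivial_limit_sequentially _ hxs])
    show "(\<lambda>k. ereal (A 0 - s k (xs 0))) \<longlonglongrightarrow> ereal (A 0 - inner v (xs 0 - x))"
      using s_lim[of "xs 0"] by (intro tendsto_intros) simp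
    show "\<forall>\<^sub>F k in sequentially. h (xs k) \<le> ereal (A 0 - s k (xs 0))"
      using ineq[where y="xs 0"] hA by (simp add: algebra_simps)
  qed
  moreover have "h x \<ge> ereal (A 0 + s 0 x)"
  proof (rule tendsto_le[OF trivial_limit_sequentially hxs])
    show "(\<lambda>k. ereal (A 0 + s 0 (xs k))) \<longlonglongrightarrow> ereal (A 0 + s 0 x)"
      unfolding s_def using xs by (intro tendsto_intros)
    show "\<forall>\<^sub>F k in sequentially. ereal (A 0 + s 0 (xs k)) \<le> h (xs k)"
      using ineq by simp
  qed
  ultimately obtain a where a: "h x = ereal a" by (cases "h x") auto
  have "h y \<ge> ereal (a + inner v (y - x))" for y
  proof (rule tendsto_le[OF trivial_limit_sequentially tendsto_const])
    have "A \<longlonglongrightarrow> a" using hxs hA a by simp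
    from tendsto_add[OF this s_lim[of y]]
    have "(\<lambda>k. A k + s k y) \<longlonglongrightarrow> a + inner v (y - x)" by simp
    then show "(\<lambda>k. ereal (A k + s k y)) \<longlonglongrightarrow> ereal (a + inner v (y - x))"
      by (rule tendsto_ereal)
  qed (use ineq in simp)
  then show thesis using that a by blast
qed


section \<open>Convex functions\<close>

lemma econvex_on_subset:
  "econvex_on W e \<Longrightarrow> W' \<subseteq> W \<Longrightarrow> convex W' \<Longrightarrow> econvex_on W' e"
  unfolding econvex_on_def by blast

lemma econvex_on_cong:
  assumes eq: "\<And>y. y \<in> W \<Longrightarrow> e y = e' y" and cv: "econvex_on W e"
  shows "econvex_on W e'"
  unfolding econvex_on_def
proof (intro conjI ballI allI impI)
  show "convex W" using cv by (simp add: econvex_on_def)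
  fix x y and t :: real assume xy: "x \<in> W" "y \<in> W" and t: "0 < t \<and> t < 1"
  then have "(1 - t) *\<^sub>R x + t *\<^sub>R y \<in> W" using \<open>convex W\<close> by (intro convexD) auto
  moreover have "e ((1 - t) *\<^sub>R x + t *\<^sub>R y) \<le> ereal (1 - t) * e x + ereal t * e y"
    using cv xy t unfolding econvex_on_def by blast
  ultimately show "e' ((1 - t) *\<^sub>R x + t *\<^sub>R y) \<le> ereal (1 - t) * e' x + ereal t * e' y"
    using eq xy by simp
qed

lemma econvex_on_UNIV_restr:
  assumes "econvex_on U g"
  shows "econvex_on UNIV (restr U g)"
  unfolding econvex_on_def
proof (intro conjI convex_UNIV ballI allI impI)
  fix x y and t :: real assume t: "0 < t \<and> t < 1"
  show "restr U g ((1 - t) *\<^sub>R x + t *\<^sub>R y) \<le> ereal (1 - t) * restr U g x + ereal t * restr U g y"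
  proof (cases "x \<in> U \<and> y \<in> U")
    case True
    then have "(1 - t) *\<^sub>R x + t *\<^sub>R y \<in> U"
      using assms t unfolding econvex_on_def by (intro convexD) auto
    moreover have "g ((1 - t) *\<^sub>R x + t *\<^sub>R y) \<le> ereal (1 - t) * g x + ereal t * g y"
      using True assms t unfolding econvex_on_def by blast
    ultimately show ?thesis using True unfolding restr_def by simp
  next
    case False
    have sum: "ereal (1 - t) * restr U g x + ereal t * restr U g y = \<infinity>"
      using t False by (auto simp: restr_def)
    show ?thesis unfolding sum by simp
  qed
qed

lemma econvex_on_imp_convex_on:
  assumes cv: "econvex_on W e" and real: "\<And>y. y \<in> W \<Longrightarrow> e y = ereal (E y)"
  shows "convex_on W E"
proof (rule convex_onI)
  show "convex W" using cv by (simp add: econvex_on_def)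
  fix t :: real and x y assume "0 < t" "t < 1" "x \<in> W" "y \<in> W"
  moreover from this have "(1 - t) *\<^sub>R x + t *\<^sub>R y \<in> W"
    using \<open>convex W\<close> by (intro convexD) auto
  moreover have "e ((1 - t) *\<^sub>R x + t *\<^sub>R y) \<le> ereal (1 - t) * e x + ereal t * e y"
    using cv calculation unfolding econvex_on_def by blast
  ultimately show "E ((1 - t) *\<^sub>R x + t *\<^sub>R y) \<le> (1 - t) * E x + t * E y"
    using real by simp
qed

lemma eventually_at_right_segment_in_open:
  fixes x d :: "'a::real_normed_vector"
  assumes "open U" "x \<in> U"
  shows "\<forall>\<^sub>F t in at_right 0. x + t *\<^sub>R d \<in> U"
proof -
  have "((\<lambda>t. x + t *\<^sub>R d) \<longlongrightarrow> x + 0 *\<^sub>R d) (at_right 0)"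
    by (intro tendsto_intros)
  then show ?thesis using assms by (auto dest: topological_tendstoD)
qed

lemma convex_on_local_subgradient_imp_subgradient:
  fixes G :: "'a::real_inner \<Rightarrow> real"
  assumes cv: "convex_on S G" and U: "open U" "U \<subseteq> S" "x \<in> U"
    and local: "\<And>y. y \<in> U \<Longrightarrow> G y \<ge> G x + inner v (y - x)"
    and y: "y \<in> S"
  shows "G y \<ge> G x + inner v (y - x)"
proof -
  have "\<forall>\<^sub>F t in at_right 0. x + t *\<^sub>R (y - x) \<in> U \<and> 0 < t \<and> t < (1::real)"
    using eventually_at_right_segment_in_open[OF U(1,3)]
    by (intro eventually_conj) (auto simp: eventually_at_right_field intro!: exI[of _ 1])
  then obtain t where t: "x + t *\<^sub>R (y - x) \<in> U" "0 < t" "t < 1"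
    using eventually_happens[of _ "at_right (0::real)"] by auto
  have "x + t *\<^sub>R (y - x) = (1 - t) *\<^sub>R x + t *\<^sub>R y" by (simp add: algebra_simps)
  then have "G (x + t *\<^sub>R (y - x)) \<le> (1 - t) * G x + t * G y"
    using convex_onD[OF cv, of t x y] t U y by auto
  moreover have "G (x + t *\<^sub>R (y - x)) \<ge> G x + t * inner v (y - x)"
    using local[OF t(1)] by simp
  ultimately have "t * (G x + inner v (y - x)) \<le> t * G y" by (simp add: algebra_simps)
  then show ?thesis using t by simp
qed

text \<open>Convexity turns the one-sided quadratic bound into a two-sided one near z
  (via the midpoint inequality); the quadratic error then disappears along segments.\<close>
lemma convex_on_quadratic_upper_bound_imp_subgradient:
  fixes E :: "'a::real_inner \<Rightarrow> real"
  assumes cv: "convex_on W E" and W: "open W" "z \<in> W"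
    and upper: "\<And>y. y \<in> W \<Longrightarrow> E y \<le> E z + inner a (y - z) + C * norm (y - z)^2"
    and y: "y \<in> W"
  shows "E y \<ge> E z + inner a (y - z)"
proof -
  define d where "d = y - z"
  have lower: "E (z + h) \<ge> E z + inner a h - C * norm h^2" if "z + h \<in> W" "z - h \<in> W" for h
  proof -
    have "z = (1 - 1/2) *\<^sub>R (z + h) + (1/2) *\<^sub>R (z - h)"
      by (simp add: algebra_simps scaleR_add_left[symmetric])
    then have "E z \<le> (1 - 1/2) * E (z + h) + (1/2) * E (z - h)"
      using convex_onD[OF cv, of "1/2" "z + h" "z - h"] that by simp
    moreover have "E (z - h) \<le> E z - inner a h + C * norm h^2"
      using upper[OF that(2)] by (simp add: inner_diff_right)
    ultimately show ?thesis by simp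
  qed
  have "\<forall>\<^sub>F t in at_right 0. z + t *\<^sub>R d \<in> W \<and> z + t *\<^sub>R (- d) \<in> W \<and> 0 < t \<and> t < (1::real)"
    using eventually_at_right_segment_in_open[OF W, of d] eventually_at_right_segment_in_open[OF W, of "- d"]
    by (intro eventually_conj) (auto simp: eventually_at_right_field intro!: exI[of _ 1])
  then have "\<forall>\<^sub>F t in at_right 0. E y \<ge> E z + inner a d - t * (C * norm d^2)"
  proof eventually_elim
    case (elim t)
    have "z + t *\<^sub>R d = (1 - t) *\<^sub>R z + t *\<^sub>R y" by (simp add: d_def algebra_simps)
    then have "E (z + t *\<^sub>R d) \<le> (1 - t) * E z + t * E y"
      using convex_onD[OF cv, of t z y] elim W y by auto
    moreover have "E (z + t *\<^sub>R d) \<ge> E z + t * inner a d - t^2 * (C * norm d^2)"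
    proof -
      have "z - t *\<^sub>R d \<in> W" using elim by (simp add: algebra_simps)
      then show ?thesis using lower[of "t *\<^sub>R d"] elim by (simp add: power_mult_distrib algebra_simps)
    qed
    ultimately have "t * (E z + inner a d - t * (C * norm d^2)) \<le> t * E y"
      by (simp add: algebra_simps power2_eq_square)
    then show ?case using elim by simp
  qed
  moreover have "((\<lambda>t. E z + inner a d - t * (C * norm d^2)) \<longlongrightarrow> E z + inner a d - 0 * (C * norm d^2)) (at_right 0)"
    by (intro tendsto_intros)
  ultimately have "E z + inner a d - 0 * (C * norm d^2) \<le> E y"
    by (intro tendsto_le[OF trivial_limit_at_right_real tendsto_const])
  then show ?thesis by (simp add: d_def)
qed

definition sup_affine :: "('a \<times> 'a \<Rightarrow> real) \<Rightarrow> ('a \<times> 'a) set \<Rightarrow> 'a::real_inner \<Rightarrow> ereal" where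
  "sup_affine c A y = (SUP (u, us)\<in>A. ereal (c (u, us) + inner us (y - u)))"

lemma sup_affine_upper:
  "(u, us) \<in> A \<Longrightarrow> ereal (c (u, us) + inner us (y - u)) \<le> sup_affine c A y"
  unfolding sup_affine_def by (rule SUP_upper2) auto

lemma sup_affine_least:
  "(\<And>u us. (u, us) \<in> A \<Longrightarrow> ereal (c (u, us) + inner us (y - u)) \<le> b) \<Longrightarrow> sup_affine c A y \<le> b"
  unfolding sup_affine_def by (rule SUP_least) auto

lemma sup_affine_finite:
  assumes "(u0, us0) \<in> A" and L: "\<And>u us. (u, us) \<in> A \<Longrightarrow> norm us \<le> L"
    and B: "\<And>u us. (u, us) \<in> A \<Longrightarrow> c (u, us) + inner us (y0 - u) \<le> B"
  shows "\<bar>sup_affine c A y\<bar> \<noteq> \<infinity>"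
proof -
  have "sup_affine c A y \<le> ereal (B + L * norm (y - y0))"
  proof (rule sup_affine_least)
    fix u us assume A: "(u, us) \<in> A"
    have "c (u, us) + inner us (y - u) = (c (u, us) + inner us (y0 - u)) + inner us (y - y0)"
      by (simp add: inner_diff_right)
    also have "\<dots> \<le> B + norm us * norm (y - y0)"
      using B[OF A] Cauchy_Schwarz_ineq2[of us "y - y0"] by linarith
    also have "\<dots> \<le> B + L * norm (y - y0)" using L[OF A] by (simp add: mult_right_mono)
    finally show "ereal (c (u, us) + inner us (y - u)) \<le> ereal (B + L * norm (y - y0))" by simp
  qed
  moreover have "ereal (c (u0, us0) + inner us0 (y - u0)) \<le> sup_affine c A y"
    using assms(1) by (rule sup_affine_upper)
  ultimately show ?thesis by auto
qed

lemma sup_affine_convex: "econvex_on UNIV (sup_affine c A)"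
  unfolding econvex_on_def
proof (intro conjI convex_UNIV ballI allI impI)
  fix x y and t :: real assume t: "0 < t \<and> t < 1"
  show "sup_affine c A ((1 - t) *\<^sub>R x + t *\<^sub>R y)
      \<le> ereal (1 - t) * sup_affine c A x + ereal t * sup_affine c A y"
  proof (rule sup_affine_least)
    fix u us assume A: "(u, us) \<in> A"
    have "ereal (c (u, us) + inner us ((1 - t) *\<^sub>R x + t *\<^sub>R y - u))
        = ereal (1 - t) * ereal (c (u, us) + inner us (x - u)) + ereal t * ereal (c (u, us) + inner us (y - u))"
      by (simp add: inner_simps algebra_simps)
    also have "\<dots> \<le> ereal (1 - t) * sup_affine c A x + ereal t * sup_affine c A y"
      using t A by (intro add_mono ereal_mult_left_mono sup_affine_upper) auto
    finally show "ereal (c (u, us) + inner us ((1 - t) *\<^sub>R x + t *\<^sub>R y - u))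
        \<le> ereal (1 - t) * sup_affine c A x + ereal t * sup_affine c A y" .
  qed
qed

lemma sup_affine_lsc:
  assumes "open U" "x \<in> U"
  shows "lsc_pt (restr U (sup_affine c A)) x"
  unfolding lsc_pt_def le_Liminf_iff
proof (intro allI impI)
  fix b assume "b < restr U (sup_affine c A) x"
  then have "b < sup_affine c A x" using assms by (simp add: restr_def)
  then obtain u us where A: "(u, us) \<in> A" and b: "b < ereal (c (u, us) + inner us (x - u))"
    unfolding sup_affine_def less_SUP_iff by auto
  have "((\<lambda>y. ereal (c (u, us) + inner us (y - u))) \<longlongrightarrow> ereal (c (u, us) + inner us (x - u))) (at x)"
    by (intro tendsto_intros)
  then have "\<forall>\<^sub>F y in at x. b < ereal (c (u, us) + inner us (y - u))"
    using b by (rule order_tendstoD(1))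
  moreover have "\<forall>\<^sub>F y in at x. y \<in> U" using assms by (rule eventually_at_in_open')
  ultimately show "\<forall>\<^sub>F y in at x. b < restr U (sup_affine c A) y"
  proof eventually_elim
    case (elim y)
    then show ?case using sup_affine_upper[OF A, of c y] by (auto simp: restr_def)
  qed
qed


section \<open>Proximal points and the Moreau envelope\<close>

lemma norm_diff_add_power2:
  fixes w z d :: "'a::real_inner"
  shows "norm (w - (z + d))^2 = norm (w - z)^2 - 2 * inner (w - z) d + norm d^2"
  using dot_norm_neg[of "w - z" d] by (simp add: algebra_simps)

lemma norm_power2_shift:
  fixes w z a x0 :: "'a::real_inner"
  shows "norm (w - z)^2 + 2 * lam * inner a (w - x0)
    = norm (w - (z - lam *\<^sub>R a))^2 - norm (x0 - (z - lam *\<^sub>R a))^2 + norm (x0 - z)^2"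
  using norm_diff_add_power2[of w z "- lam *\<^sub>R a"] norm_diff_add_power2[of x0 z "- lam *\<^sub>R a"]
  by (simp add: inner_diff_left inner_commute algebra_simps)

lemma norm_midpoint_power2:
  fixes u v z :: "'a::real_inner"
  shows "norm ((1/2) *\<^sub>R u + (1/2) *\<^sub>R v - z)^2 = (norm (u - z)^2 + norm (v - z)^2)/2 - norm (u - v)^2/4"
proof -
  have zz: "(1/2::real) *\<^sub>R z + (1/2) *\<^sub>R z = z" by (simp add: scaleR_add_left[symmetric])
  have "(1/2) *\<^sub>R u + (1/2) *\<^sub>R v - z = (1/2) *\<^sub>R ((u - z) + (v - z))"
    by (simp add: scaleR_add_right scaleR_diff_right algebra_simps zz)
  moreover have "u - v = (u - z) - (v - z)" by simp
  ultimately show ?thesis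
    by (simp only:) (unfold power2_norm_eq_inner, simp add: inner_simps inner_commute algebra_simps power2_eq_square, simp add: field_simps)
qed

lemma le_three_times_if_power2_le:
  fixes a t \<rho> :: real
  assumes "a^2 \<le> \<rho>^2 + t^2/2" "0 \<le> t" "t \<le> a + \<rho>" "0 \<le> a" "0 \<le> \<rho>"
  shows "a \<le> 3 * \<rho>"
proof -
  have "t^2 \<le> (a + \<rho>)^2" using assms by (intro power_mono) auto
  then have "(a - 3 * \<rho>) * (a + \<rho>) \<le> 0" using assms(1) by (simp add: power2_eq_square algebra_simps)
  then show ?thesis using assms(4,5) by (cases "a + \<rho> = 0") (auto simp: mult_le_0_iff)
qed

lemma norm_convex_comb_power2_le:
  fixes a b :: "'a::real_normed_vector"
  assumes "0 \<le> t" "t \<le> 1"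
  shows "norm ((1 - t) *\<^sub>R a + t *\<^sub>R b)^2 \<le> (1 - t) * norm a^2 + t * norm b^2"
proof -
  have "norm ((1 - t) *\<^sub>R a + t *\<^sub>R b)^2 \<le> ((1 - t) * norm a + t * norm b)^2"
    using norm_triangle_ineq[of "(1 - t) *\<^sub>R a" "t *\<^sub>R b"] assms by (intro power_mono) auto
  also have "\<dots> = (1 - t) * norm a^2 + t * norm b^2 - t * (1 - t) * (norm a - norm b)^2"
    by (simp add: power2_eq_square algebra_simps)
  also have "\<dots> \<le> (1 - t) * norm a^2 + t * norm b^2"
    using assms by simp
  finally show ?thesis .
qed

lemma Cauchy_if_dist_small_where_vanishing:
  fixes X :: "nat \<Rightarrow> 'a::metric_space" and g :: "nat \<Rightarrow> real"
  assumes small: "\<And>e. e > 0 \<Longrightarrow> \<exists>\<delta>>0. \<forall>n k. g n < \<delta> \<longrightarrow> g k < \<delta> \<longrightarrow> dist (X n) (X k) < e"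
    and g: "g \<longlonglongrightarrow> 0"
  shows "Cauchy X"
proof (rule metric_CauchyI)
  fix e :: real assume "e > 0"
  then obtain \<delta> where "\<delta> > 0" and \<delta>: "\<And>n k. g n < \<delta> \<Longrightarrow> g k < \<delta> \<Longrightarrow> dist (X n) (X k) < e"
    using small by blast
  then obtain N where "\<And>n. n \<ge> N \<Longrightarrow> g n < \<delta>"
    using order_tendstoD(2)[OF g \<open>\<delta> > 0\<close>] by (auto simp: eventually_sequentially)
  then show "\<exists>N. \<forall>m\<ge>N. \<forall>n\<ge>N. dist (X m) (X n) < e" using \<delta> by blast
qed

definition prox_point :: "real \<Rightarrow> ('a::real_normed_vector \<Rightarrow> ereal) \<Rightarrow> 'a \<Rightarrow> 'a \<Rightarrow> bool" where
  "prox_point lam f z p \<longleftrightarrow>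
     (\<forall>w. f p + ereal (norm (p - z)^2 / (2*lam)) \<le> f w + ereal (norm (w - z)^2 / (2*lam)))"

lemma moreau_env_le: "moreau_env lam f z \<le> f w + ereal (norm (w - z)^2 / (2*lam))"
  unfolding moreau_env_def by (rule INF_lower) simp

lemma moreau_env_prox_point:
  "prox_point lam f z p \<Longrightarrow> moreau_env lam f z = f p + ereal (norm (p - z)^2 / (2*lam))"
  unfolding prox_point_def by (intro antisym moreau_env_le) (simp add: moreau_env_def INF_greatest)

lemma prox_point_imp_lim_subdiff:
  fixes f :: "'a::real_inner \<Rightarrow> ereal"
  assumes lam: "lam > 0" and fp: "f p = ereal a" and prox: "prox_point lam f z p"
  shows "(1/lam) *\<^sub>R (z - p) \<in> lim_subdiff f p"
proof -
  have "f y \<ge> ereal (a + inner ((1/lam) *\<^sub>R (z - p)) (y - p) - 1/(2*lam) * norm (y - p)^2)" for y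
  proof -
    have i: "inner ((1/lam) *\<^sub>R (z - p)) (y - p) = inner (y - p) (z - p) / lam"
      by (simp add: inner_commute)
    have "norm (y - z)^2 = norm (y - p)^2 - 2 * inner (y - p) (z - p) + norm (p - z)^2"
      using norm_diff_add_power2[of y p "z - p"] by (simp add: norm_minus_commute)
    then have numerator: "2 * inner (y - p) (z - p) - norm (y - p)^2 = norm (p - z)^2 - norm (y - z)^2"
      by simp
    have "a + inner ((1/lam) *\<^sub>R (z - p)) (y - p) - 1/(2*lam) * norm (y - p)^2
        = a + (2 * inner (y - p) (z - p) - norm (y - p)^2) / (2*lam)"
      unfolding i using lam by (simp add: field_simps)
    also have "\<dots> = a + norm (p - z)^2 / (2*lam) - norm (y - z)^2 / (2*lam)"
      unfolding numerator by (simp add: diff_divide_distrib)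
    finally have "a + inner ((1/lam) *\<^sub>R (z - p)) (y - p) - 1/(2*lam) * norm (y - p)^2
        = a + norm (p - z)^2 / (2*lam) - norm (y - z)^2 / (2*lam)" .
    moreover have "f p + ereal (norm (p - z)^2 / (2*lam)) \<le> f y + ereal (norm (y - z)^2 / (2*lam))"
      using prox unfolding prox_point_def by blast
    ultimately show ?thesis using fp by (cases "f y") auto
  qed
  then have "(1/lam) *\<^sub>R (z - p) \<in> eps_subdiff f 0 p"
    using lam by (intro eps_subdiff_zero_if_quadratic_minorant[where f=f and x=p and c="1/(2*lam)", OF fp open_UNIV UNIV_I]) auto
  then show ?thesis by (rule eps_subdiff_zero_imp_lim_subdiff)
qed

lemma prox_point_transfer:
  assumes prox: "prox_point lam \<psi> z p" and eq: "\<phi> p = \<psi> p"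
    and below: "\<And>w. w \<in> S \<Longrightarrow> \<psi> w \<le> \<phi> w"
    and outside: "\<And>w. w \<notin> S \<Longrightarrow>
      \<psi> p + ereal (norm (p - z)^2 / (2*lam)) \<le> \<phi> w + ereal (norm (w - z)^2 / (2*lam))"
  shows "prox_point lam \<phi> z p"
  unfolding prox_point_def
proof
  fix w
  show "\<phi> p + ereal (norm (p - z)^2 / (2*lam)) \<le> \<phi> w + ereal (norm (w - z)^2 / (2*lam))"
  proof (cases "w \<in> S")
    case True
    then have "\<psi> w + ereal (norm (w - z)^2 / (2*lam)) \<le> \<phi> w + ereal (norm (w - z)^2 / (2*lam))"
      by (intro add_right_mono below)
    then show ?thesis unfolding eq using prox unfolding prox_point_def by (blast intro: order_trans)
  qed (use eq outside in simp)
qed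

lemma moreau_env_minimizing_seq:
  assumes "moreau_env lam f z = ereal m"
  obtains ws where "\<And>n. f (ws n) + ereal (norm (ws n - z)^2 / (2*lam)) < ereal (m + inverse (Suc n))"
proof -
  have "\<exists>w. f w + ereal (norm (w - z)^2 / (2*lam)) < ereal (m + inverse (Suc n))" for n
  proof -
    have "moreau_env lam f z < ereal (m + inverse (Suc n))" using assms by simp
    then show ?thesis unfolding moreau_env_def by (simp add: INF_less_iff)
  qed
  then show thesis using that by metis
qed

lemma prox_point_of_minimizing_seq:
  fixes f :: "'a::real_normed_vector \<Rightarrow> ereal"
  assumes lam: "lam > 0" and env: "moreau_env lam f z = ereal m"
    and ws: "\<And>n. f (ws n) + ereal (norm (ws n - z)^2 / (2*lam)) < ereal (m + inverse (Suc n))"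
    and lim: "ws \<longlonglongrightarrow> p" and lsc: "lsc_pt f p"
  shows "\<bar>f p\<bar> \<noteq> \<infinity>" "prox_point lam f z p"
proof -
  define q where "q w = norm (w - z)^2 / (2*lam)" for w
  have ge: "ereal m \<le> f w + ereal (q w)" for w
    using moreau_env_le[of lam f z w] env by (simp add: q_def)
  define hs where "hs n = real_of_ereal (f (ws n))" for n
  have hs: "f (ws n) = ereal (hs n)" for n
    using ge[of "ws n"] ws[of n] unfolding hs_def q_def by (cases "f (ws n)") auto
  have "(\<lambda>n. hs n + q (ws n)) \<longlonglongrightarrow> m"
  proof (rule tendsto_sandwich[of "\<lambda>_. m" _ _ "\<lambda>n. m + inverse (Suc n)"])
    show "\<forall>\<^sub>F n in sequentially. m \<le> hs n + q (ws n)"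
      using ge hs by (intro always_eventually allI) (metis plus_ereal.simps(1) ereal_less_eq(3))
    show "\<forall>\<^sub>F n in sequentially. hs n + q (ws n) \<le> m + inverse (Suc n)"
      using ws hs by (simp add: q_def less_imp_le)
    show "(\<lambda>n. m + inverse (Suc n)) \<longlonglongrightarrow> m"
      using tendsto_add[OF tendsto_const LIMSEQ_inverse_real_of_nat, of m] by simp
  qed simp
  moreover have "(\<lambda>n. q (ws n)) \<longlonglongrightarrow> q p" unfolding q_def using lim lam by (intro tendsto_intros) auto
  ultimately have "hs \<longlonglongrightarrow> m - q p" using tendsto_diff by fastforce
  then have "f p \<le> ereal (m - q p)" using lsc_pt_le_lim[OF lsc lim] hs by simp
  moreover have "ereal m \<le> f p + ereal (q p)" by (rule ge)
  ultimately have fp: "f p = ereal (m - q p)" by (cases "f p") auto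
  then show "\<bar>f p\<bar> \<noteq> \<infinity>" by simp
  show "prox_point lam f z p" unfolding prox_point_def using ge fp by (simp add: q_def)
qed


text \<open>The prox objective of a convex function is 1/lam-strongly convex.\<close>
lemma convex_prox_objective_near_minimizers_close:
  fixes h :: "'a::real_inner \<Rightarrow> ereal"
  assumes cv: "econvex_on UNIV h" and lam: "lam > 0"
    and m: "\<And>w. ereal m \<le> h w + ereal (norm (w - z)^2 / (2*lam))"
    and w1: "h w1 + ereal (norm (w1 - z)^2 / (2*lam)) \<le> ereal (m + e1)"
    and w2: "h w2 + ereal (norm (w2 - z)^2 / (2*lam)) \<le> ereal (m + e2)"
  shows "norm (w1 - w2)^2 \<le> 4 * lam * (e1 + e2)"
proof -
  define q where "q w = norm (w - z)^2 / (2*lam)" for w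
  obtain h1 h2 where h1: "h w1 = ereal h1" and h2: "h w2 = ereal h2"
    using m[of w1] m[of w2] w1 w2 by (cases "h w1"; cases "h w2") auto
  define mid where "mid = (1/2) *\<^sub>R w1 + (1/2) *\<^sub>R w2"
  have "\<forall>x y. \<forall>t::real. 0 < t \<and> t < 1 \<longrightarrow> h ((1 - t) *\<^sub>R x + t *\<^sub>R y) \<le> ereal (1 - t) * h x + ereal t * h y"
    using cv unfolding econvex_on_def by blast
  from this[rule_format, of "1/2" w1 w2] have "h mid \<le> ereal ((h1 + h2)/2)"
    using h1 h2 by (simp add: mid_def add_divide_distrib)
  moreover have "ereal m \<le> h mid + ereal (q mid)" using m by (simp add: q_def)
  ultimately have "ereal m \<le> ereal ((h1 + h2)/2) + ereal (q mid)"
    by (meson add_right_mono order_trans)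
  then have "m \<le> (h1 + h2)/2 + q mid" by simp
  moreover have "q mid = (q w1 + q w2)/2 - norm (w1 - w2)^2/(8*lam)"
  proof -
    have "q mid = ((norm (w1 - z)^2 + norm (w2 - z)^2)/2 - norm (w1 - w2)^2/4) / (2*lam)"
      using norm_midpoint_power2[of w1 w2 z] by (simp add: q_def mid_def)
    also have "\<dots> = (q w1 + q w2)/2 - norm (w1 - w2)^2/(8*lam)"
      unfolding q_def using lam by (simp add: field_simps)
    finally show ?thesis .
  qed
  moreover have "h1 + q w1 \<le> m + e1" "h2 + q w2 \<le> m + e2" using w1 w2 h1 h2 by (simp_all add: q_def)
  ultimately have "norm (w1 - w2)^2 / (8*lam) \<le> (e1 + e2)/2"
    by (simp add: field_simps)
  then show ?thesis using lam by (simp add: field_simps)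
qed

lemma prox_objective_affine_lower_bound:
  fixes h :: "'a::real_inner \<Rightarrow> ereal"
  assumes lam: "lam > 0" and minorant: "h w \<ge> ereal (b + inner a (w - x0))"
  shows "h w + ereal (norm (w - z)^2 / (2*lam)) \<ge> ereal (b + norm (x0 - z)^2 / (2*lam)
      + (norm (w - (z - lam *\<^sub>R a))^2 - norm (x0 - (z - lam *\<^sub>R a))^2) / (2*lam))"
proof -
  define c where "c = z - lam *\<^sub>R a"
  have "norm (w - c)^2 = norm (w - z)^2 + 2 * lam * inner a (w - z) + lam^2 * norm a^2"
    "norm (x0 - c)^2 = norm (x0 - z)^2 + 2 * lam * inner a (x0 - z) + lam^2 * norm a^2"
    using norm_diff_add_power2[of w z "- lam *\<^sub>R a"] norm_diff_add_power2[of x0 z "- lam *\<^sub>R a"]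
    by (simp_all add: c_def inner_commute power_mult_distrib)
  moreover have "inner a (w - z) - inner a (x0 - z) = inner a (w - x0)" by (simp add: inner_simps)
  ultimately have id: "b + inner a (w - x0) + norm (w - z)^2 / (2*lam)
      = b + norm (x0 - z)^2 / (2*lam) + (norm (w - c)^2 - norm (x0 - c)^2) / (2*lam)"
    using lam by (simp add: field_simps)
  have "ereal (b + inner a (w - x0)) + ereal (norm (w - z)^2 / (2*lam)) \<le> h w + ereal (norm (w - z)^2 / (2*lam))"
    by (rule add_right_mono[OF minorant])
  then show ?thesis by (simp only: plus_ereal.simps(1) id c_def)
qed

lemma convex_prox_minimizing_seq_Cauchy:
  fixes h :: "'a::real_inner \<Rightarrow> ereal"
  assumes cv: "econvex_on UNIV h" and lam: "lam > 0" and env: "moreau_env lam h z = ereal m"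
    and ws: "\<And>n. h (ws n) + ereal (norm (ws n - z)^2 / (2*lam)) < ereal (m + inverse (Suc n))"
  shows "Cauchy ws"
proof (rule Cauchy_if_dist_small_where_vanishing[OF _ LIMSEQ_inverse_real_of_nat])
  have ge: "ereal m \<le> h w + ereal (norm (w - z)^2 / (2*lam))" for w
    using moreau_env_le[of lam h z w] env by simp
  fix e :: real assume "e > 0"
  have "dist (ws n) (ws k) < e" if "inverse (Suc n) < e^2/(8*lam)" "inverse (Suc k) < e^2/(8*lam)" for n k
  proof -
    have "dist (ws n) (ws k)^2 \<le> 4 * lam * (inverse (Suc n) + inverse (Suc k))"
      using convex_prox_objective_near_minimizers_close[OF cv lam ge
          less_imp_le[OF ws[of n]] less_imp_le[OF ws[of k]]]
      by (simp add: dist_norm)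
    also have "\<dots> < 4 * lam * (e^2/(8*lam) + e^2/(8*lam))"
      using that lam by (intro mult_strict_left_mono add_strict_mono) auto
    also have "\<dots> = e^2" using lam by (simp add: field_simps)
    finally show ?thesis using \<open>e > 0\<close> by (simp add: power2_less_imp_less)
  qed
  then show "\<exists>\<delta>>0. \<forall>n k. inverse (Suc n) < \<delta> \<longrightarrow> inverse (Suc k) < \<delta> \<longrightarrow> dist (ws n) (ws k) < e"
    using \<open>e > 0\<close> lam by (intro exI[of _ "e^2/(8*lam)"]) auto
qed

lemma prox_point_exists_convex:
  fixes h :: "'a::{real_inner,complete_space} \<Rightarrow> ereal"
  assumes cv: "econvex_on UNIV h" and hx: "h x0 = ereal b"
    and minorant: "\<And>w. h w \<ge> ereal (b + inner a (w - x0))" and lam: "lam > 0"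
    and lsc: "\<And>p. norm (p - (z - lam *\<^sub>R a)) \<le> norm (x0 - (z - lam *\<^sub>R a)) \<Longrightarrow> lsc_pt h p"
  obtains p where "\<bar>h p\<bar> \<noteq> \<infinity>" "norm (p - (z - lam *\<^sub>R a)) \<le> norm (x0 - (z - lam *\<^sub>R a))"
    "prox_point lam h z p"
proof -
  define c where "c = z - lam *\<^sub>R a"
  define q where "q w = norm (w - z)^2 / (2*lam)" for w
  have lower: "h w + ereal (q w) \<ge> ereal (b + q x0 + (norm (w - c)^2 - norm (x0 - c)^2)/(2*lam))" for w
    using prox_objective_affine_lower_bound[where h=h, OF lam minorant[of w], of z] by (simp add: q_def c_def)
  have "moreau_env lam h z \<le> ereal (b + q x0)"
    using moreau_env_le[of lam h z x0] hx by (simp add: q_def)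
  moreover have "moreau_env lam h z \<ge> ereal (b + q x0 - norm (x0 - c)^2/(2*lam))"
    unfolding moreau_env_def
  proof (rule INF_greatest)
    fix w
    have "b + q x0 - norm (x0 - c)^2/(2*lam) \<le> b + q x0 + (norm (w - c)^2 - norm (x0 - c)^2)/(2*lam)"
      using lam by (simp add: field_simps)
    then show "ereal (b + q x0 - norm (x0 - c)^2/(2*lam)) \<le> h w + ereal (norm (w - z)^2 / (2*lam))"
      using lower[of w] unfolding q_def by (meson ereal_less_eq(3) order_trans)
  qed
  ultimately obtain m where env: "moreau_env lam h z = ereal m" by (cases "moreau_env lam h z") auto
  have ge: "ereal m \<le> h w + ereal (q w)" for w using moreau_env_le[of lam h z w] env by (simp add: q_def)
  obtain ws where ws: "\<And>n. h (ws n) + ereal (q (ws n)) < ereal (m + inverse (Suc n))"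
    using moreau_env_minimizing_seq[OF env] unfolding q_def by blast
  have "Cauchy ws"
    using convex_prox_minimizing_seq_Cauchy[OF cv lam env] ws unfolding q_def .
  then obtain p where p: "ws \<longlonglongrightarrow> p" using Cauchy_convergent_iff convergent_def by blast
  have bound: "norm (ws n - c)^2 \<le> norm (x0 - c)^2 + 2 * lam * inverse (Suc n)" for n
  proof -
    have "b + q x0 + (norm (ws n - c)^2 - norm (x0 - c)^2)/(2*lam) < m + inverse (Suc n)"
      using le_less_trans[OF lower[of "ws n"] ws[of n]] by simp
    moreover have "m \<le> b + q x0" using ge[of x0] hx by simp
    ultimately have "(norm (ws n - c)^2 - norm (x0 - c)^2)/(2*lam) < inverse (Suc n)" by linarith
    then have "norm (ws n - c)^2 - norm (x0 - c)^2 < inverse (Suc n) * (2*lam)"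
      using lam by (subst (asm) pos_divide_less_eq) auto
    then show ?thesis by (simp add: algebra_simps)
  qed
  have "norm (p - c)^2 \<le> norm (x0 - c)^2 + 2 * lam * 0"
  proof (rule tendsto_le[OF trivial_limit_sequentially])
    show "(\<lambda>n. norm (x0 - c)^2 + 2 * lam * inverse (Suc n)) \<longlonglongrightarrow> norm (x0 - c)^2 + 2 * lam * 0"
      by (intro tendsto_intros LIMSEQ_inverse_real_of_nat)
    show "(\<lambda>n. norm (ws n - c)^2) \<longlonglongrightarrow> norm (p - c)^2" using p by (intro tendsto_intros)
  qed (use bound in simp)
  then have near: "norm (p - c) \<le> norm (x0 - c)" by (simp add: power_mono_iff)
  note prox = prox_point_of_minimizing_seq[OF lam env ws[unfolded q_def] p lsc[OF near[unfolded c_def]]]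
  show thesis using that[OF prox(1) near[unfolded c_def] prox(2)] .
qed


text \<open>Convexity of the envelope and its quadratic upper bound through a near-minimizer w give
  a two-sided bound on the slope (z - w)/lam.\<close>
lemma moreau_env_convex_near_minimizers_close:
  fixes f :: "'a::real_inner \<Rightarrow> ereal"
  assumes lam: "lam > 0" and cv: "convex_on (ball z s) E"
    and env: "\<And>y. y \<in> ball z s \<Longrightarrow> moreau_env lam f y = ereal (E y)"
    and w1: "f w1 + ereal (norm (w1 - z)^2 / (2*lam)) \<le> ereal (E z + e1)"
    and w2: "f w2 + ereal (norm (w2 - z)^2 / (2*lam)) \<le> ereal (E z + e2)"
    and \<sigma>: "0 < \<sigma>" "\<sigma> < s"
  shows "norm (w1 - w2) \<le> lam * (e1 + e2) / \<sigma> + \<sigma>"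
proof -
  have upper: "E (z + d) \<le> E z + e - inner (w - z) d / lam + norm d^2 / (2*lam)"
    if d: "norm d < s" and w: "f w + ereal (norm (w - z)^2 / (2*lam)) \<le> ereal (E z + e)" for d w e
  proof -
    have "z + d \<in> ball z s" using d by (simp add: dist_norm)
    then have "ereal (E (z + d)) \<le> f w + ereal (norm (w - (z + d))^2 / (2*lam))"
      using moreau_env_le[of lam f "z + d" w] env by simp
    moreover have "norm (w - (z + d))^2 / (2*lam)
        = norm (w - z)^2 / (2*lam) - inner (w - z) d / lam + norm d^2 / (2*lam)"
      unfolding norm_diff_add_power2 using lam by (simp add: field_simps)
    ultimately show ?thesis using w by (cases "f w") auto
  qed
  have "ereal (E z) \<le> f w + ereal (norm (w - z)^2 / (2*lam))" for w
    using moreau_env_le[of lam f z w] env \<sigma> by simp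
  then have e: "0 \<le> e1" "0 \<le> e2" using w1 w2 by (metis ereal_less_eq(3) le_add_same_cancel1 order_trans)+
  show ?thesis
  proof (cases "w1 = w2")
    case True
    then show ?thesis using lam e \<sigma> by simp
  next
    case False
    define r where "r = norm (w1 - w2)"
    define d where "d = (\<sigma> / r) *\<^sub>R (w1 - w2)"
    have r: "r > 0" using False by (simp add: r_def)
    have nd: "norm d = \<sigma>" "norm (- d) = \<sigma>" using r \<sigma> by (simp_all add: d_def r_def)
    have "inner (w1 - w2) d = \<sigma> * r"
      using r by (simp add: d_def r_def power2_norm_eq_inner[symmetric] power2_eq_square)
    have "z = (1 - 1/2) *\<^sub>R (z + d) + (1/2) *\<^sub>R (z + - d)"
      by (simp add: algebra_simps scaleR_add_left[symmetric])
    then have "2 * E z \<le> E (z + d) + E (z + - d)"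
      using convex_onD[OF cv, of "1/2" "z + d" "z + - d"] nd \<sigma> by (simp add: dist_norm)
    moreover have "E (z + d) \<le> E z + e1 - inner (w1 - z) d / lam + \<sigma>^2 / (2*lam)"
      using upper[of d w1 e1] w1 nd \<sigma> by simp
    moreover have "E (z + - d) \<le> E z + e2 + inner (w2 - z) d / lam + \<sigma>^2 / (2*lam)"
      using upper[of "- d" w2 e2] w2 nd \<sigma> by simp
    moreover have "inner (w1 - z) d / lam - inner (w2 - z) d / lam = \<sigma> * r / lam"
      using \<open>inner (w1 - w2) d = \<sigma> * r\<close> by (simp add: inner_diff_left diff_divide_distrib[symmetric])
    moreover have "\<sigma>^2 / (2*lam) + \<sigma>^2 / (2*lam) = \<sigma>^2 / lam" by simp
    ultimately have "\<sigma> * r / lam \<le> e1 + e2 + \<sigma>^2 / lam" by linarith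
    then have "\<sigma> * r \<le> lam * (e1 + e2) + \<sigma>^2" using lam by (simp add: field_simps)
    then show ?thesis using \<sigma> by (simp add: r_def field_simps power2_eq_square)
  qed
qed

lemma prox_point_exists_if_moreau_env_convex:
  fixes f :: "'a::{real_inner,complete_space} \<Rightarrow> ereal"
  assumes lsc: "lsc_fun f" and lam: "lam > 0" and s: "s > 0"
    and cv: "convex_on (ball z s) E"
    and env: "\<And>y. y \<in> ball z s \<Longrightarrow> moreau_env lam f y = ereal (E y)"
  obtains p where "\<bar>f p\<bar> \<noteq> \<infinity>" "prox_point lam f z p"
proof -
  have envz: "moreau_env lam f z = ereal (E z)" using env s by simp
  obtain ws where ws: "\<And>n. f (ws n) + ereal (norm (ws n - z)^2 / (2*lam)) < ereal (E z + inverse (Suc n))"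
    using moreau_env_minimizing_seq[OF envz] by blast
  have "Cauchy ws"
  proof (rule Cauchy_if_dist_small_where_vanishing[OF _ LIMSEQ_inverse_real_of_nat])
    fix e :: real assume e: "e > 0"
    define \<sigma> where "\<sigma> = min (s/2) (e/2)"
    have \<sigma>: "0 < \<sigma>" "\<sigma> < s" "\<sigma> \<le> e/2" using s e by (auto simp: \<sigma>_def)
    have "dist (ws n) (ws k) < e"
      if "inverse (Suc n) < \<sigma> * e / (4*lam)" "inverse (Suc k) < \<sigma> * e / (4*lam)" for n k
    proof -
      have "dist (ws n) (ws k) \<le> lam * (inverse (Suc n) + inverse (Suc k)) / \<sigma> + \<sigma>"
        using moreau_env_convex_near_minimizers_close[OF lam cv env
            less_imp_le[OF ws[of n]] less_imp_le[OF ws[of k]] \<sigma>(1,2)]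
        by (simp add: dist_norm)
      also have "\<dots> < lam * (\<sigma> * e / (4*lam) + \<sigma> * e / (4*lam)) / \<sigma> + \<sigma>"
        using that lam \<sigma>
        by (intro add_strict_right_mono divide_strict_right_mono mult_strict_left_mono add_strict_mono) auto
      also have "\<dots> = e/2 + \<sigma>" using lam \<sigma> by (simp add: field_simps)
      finally show ?thesis using \<sigma> by simp
    qed
    then show "\<exists>\<delta>>0. \<forall>n k. inverse (Suc n) < \<delta> \<longrightarrow> inverse (Suc k) < \<delta> \<longrightarrow> dist (ws n) (ws k) < e"
      using \<sigma> e lam by (intro exI[of _ "\<sigma> * e / (4*lam)"]) auto
  qed
  then obtain p where "ws \<longlonglongrightarrow> p" using Cauchy_convergent_iff convergent_def by blast
  note prox = prox_point_of_minimizing_seq[OF lam envz ws this lsc[unfolded lsc_fun_def, rule_format]]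
  show thesis using that[OF prox] .
qed

lemma moreau_env_convex_if_prox_points:
  fixes h :: "'a::real_inner \<Rightarrow> ereal"
  assumes cv: "econvex_on UNIV h" and lam: "lam > 0" and S: "convex S"
    and prox: "\<And>z. z \<in> S \<Longrightarrow> \<exists>p. \<bar>h p\<bar> \<noteq> \<infinity> \<and> prox_point lam h z p"
  shows "econvex_on S (moreau_env lam h)"
  unfolding econvex_on_def
proof (intro conjI S ballI allI impI)
  fix z1 z2 and t :: real assume z: "z1 \<in> S" "z2 \<in> S" and t: "0 < t \<and> t < 1"
  define q where "q z w = norm (w - z)^2 / (2*lam)" for z w :: 'a
  obtain p1 where p1: "\<bar>h p1\<bar> \<noteq> \<infinity>" "prox_point lam h z1 p1"
    using prox z(1) by meson
  obtain p2 where p2: "\<bar>h p2\<bar> \<noteq> \<infinity>" "prox_point lam h z2 p2"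
    using prox z(2) by meson
  obtain a1 a2 where a: "h p1 = ereal a1" "h p2 = ereal a2" using p1(1) p2(1) by fastforce
  define zt where "zt = (1 - t) *\<^sub>R z1 + t *\<^sub>R z2"
  define pt where "pt = (1 - t) *\<^sub>R p1 + t *\<^sub>R p2"
  have "h pt \<le> ereal (1 - t) * h p1 + ereal t * h p2"
    using cv t unfolding econvex_on_def pt_def by blast
  then have "h pt \<le> ereal ((1 - t) * a1 + t * a2)" using a by simp
  moreover have "q zt pt \<le> (1 - t) * q z1 p1 + t * q z2 p2"
  proof -
    have "pt - zt = (1 - t) *\<^sub>R (p1 - z1) + t *\<^sub>R (p2 - z2)"
      by (simp add: pt_def zt_def algebra_simps)
    then have "norm (pt - zt)^2 \<le> (1 - t) * norm (p1 - z1)^2 + t * norm (p2 - z2)^2"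
      using norm_convex_comb_power2_le[of t "p1 - z1" "p2 - z2"] t by simp
    then show ?thesis unfolding q_def using lam by (simp add: field_simps)
  qed
  moreover have "moreau_env lam h zt \<le> h pt + ereal (q zt pt)"
    unfolding q_def by (rule moreau_env_le)
  ultimately have "moreau_env lam h zt \<le> ereal ((1 - t) * a1 + t * a2) + ereal ((1 - t) * q z1 p1 + t * q z2 p2)"
    by (meson add_mono ereal_less_eq(3) order_trans)
  then have "moreau_env lam h zt \<le> ereal ((1 - t) * (a1 + q z1 p1) + t * (a2 + q z2 p2))"
    by (simp add: algebra_simps)
  then show "moreau_env lam h ((1 - t) *\<^sub>R z1 + t *\<^sub>R z2)
      \<le> ereal (1 - t) * moreau_env lam h z1 + ereal t * moreau_env lam h z2"
    using moreau_env_prox_point[OF p1(2)] moreau_env_prox_point[OF p2(2)] a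
    by (simp add: zt_def q_def)
qed

text \<open>The subgradient inequality for the envelope at u + lam us transfers back to f.\<close>
lemma moreau_env_convex_imp_subgradient_ineq:
  fixes f :: "'a::real_inner \<Rightarrow> ereal"
  assumes lam: "lam > 0" and B: "open B" and cv: "convex_on B E"
    and env: "\<And>y. y \<in> B \<Longrightarrow> moreau_env lam f y = ereal (E y)"
    and fu: "f u = ereal a" and prox: "prox_point lam f (u + lam *\<^sub>R us) u"
    and Bu: "u + lam *\<^sub>R us \<in> B" and Bx: "x + lam *\<^sub>R us \<in> B"
  shows "f x \<ge> ereal (a + inner us (x - u))"
proof -
  define z where "z = u + lam *\<^sub>R us"
  have uz: "norm (u - z)^2 / (2*lam) = lam * norm us^2 / 2"
    using lam by (simp add: z_def power_mult_distrib power2_eq_square)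
  have Ez: "E z = a + lam * norm us^2 / 2"
    using moreau_env_prox_point[OF prox] env[OF Bu] fu uz by (simp add: z_def)
  have "E y \<le> E z + inner us (y - z) + 1/(2*lam) * norm (y - z)^2" if "y \<in> B" for y
  proof -
    have "ereal (E y) \<le> f u + ereal (norm (u - y)^2 / (2*lam))"
      using moreau_env_le[of lam f y u] env[OF that] by simp
    moreover have "norm (u - y)^2 / (2*lam) = norm (u - z)^2 / (2*lam) + inner us (y - z) + norm (y - z)^2 / (2*lam)"
      using norm_diff_add_power2[of u z "y - z"] lam by (simp add: z_def field_simps inner_commute)
    ultimately show ?thesis using fu uz Ez by simp
  qed
  then have "E (x + lam *\<^sub>R us) \<ge> E z + inner us (x + lam *\<^sub>R us - z)"
    by (intro convex_on_quadratic_upper_bound_imp_subgradient[where C="1/(2*lam)", OF cv B])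
       (auto simp: Bu Bx z_def)
  moreover have "ereal (E (x + lam *\<^sub>R us)) \<le> f x + ereal (lam * norm us^2 / 2)"
  proof -
    have eq: "norm (x - (x + lam *\<^sub>R us))^2 / (2*lam) = lam * norm us^2 / 2"
      using uz by (simp add: z_def)
    show ?thesis
      using moreau_env_le[of lam f "x + lam *\<^sub>R us" x] unfolding eq using env[OF Bx] by simp
  qed
  ultimately show ?thesis using Ez by (cases "f x") (auto simp: z_def)
qed


section \<open>Prox-boundedness\<close>

lemma prox_bounded_minorant:
  fixes f :: "'a::real_normed_vector \<Rightarrow> ereal"
  assumes "prox_bounded f"
  obtains a b where "a \<ge> 0" "\<And>w. f w \<ge> ereal (b - a * norm (w - x)^2)"
proof -
  obtain \<alpha> \<beta> x0 where ab: "\<And>w. f w \<ge> ereal (\<alpha> * norm (w - x0)^2 + \<beta>)"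
    using assms unfolding prox_bounded_def by blast
  define a where "a = 2 * max (- \<alpha>) 0"
  have quad: "\<alpha> * norm (w - x0)^2 + \<beta> \<ge> (\<beta> - a * norm (x - x0)^2) - a * norm (w - x)^2" for w
  proof -
    have "norm (w - x0) \<le> norm (w - x) + norm (x - x0)"
      using norm_triangle_ineq[of "w - x" "x - x0"] by simp
    then have "norm (w - x0)^2 \<le> (norm (w - x) + norm (x - x0))^2" by (simp add: power_mono)
    also have "\<dots> \<le> 2 * norm (w - x)^2 + 2 * norm (x - x0)^2"
      using sum_squares_ge_zero[of "norm (w - x) - norm (x - x0)" 0] by (simp add: power2_eq_square algebra_simps)
    finally have "- max (- \<alpha>) 0 * norm (w - x0)^2 \<ge> - max (- \<alpha>) 0 * (2 * norm (w - x)^2 + 2 * norm (x - x0)^2)"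
      by (intro mult_left_mono_neg) auto
    moreover have "\<alpha> * norm (w - x0)^2 \<ge> - max (- \<alpha>) 0 * norm (w - x0)^2"
      by (intro mult_right_mono) auto
    ultimately show ?thesis by (simp add: a_def algebra_simps)
  qed
  have "f w \<ge> ereal ((\<beta> - a * norm (x - x0)^2) - a * norm (w - x)^2)" for w
    using order_trans[OF _ ab[of w]] quad[of w] by simp
  moreover have "a \<ge> 0" by (simp add: a_def)
  ultimately show thesis using that by blast
qed

lemma far_quadratic_lower_bound:
  fixes a b lam \<delta> n M :: real
  assumes a: "a \<ge> 0" and lam: "0 < lam" "16 * a * lam \<le> 1" and \<delta>: "\<delta> > 0" and n: "\<delta>/2 \<le> n"
    and small: "lam * (16 * (\<bar>M - b\<bar> + 1)) < \<delta>^2"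
  shows "M \<le> b - 4 * a * n^2 + n^2 / (2*lam)"
proof -
  have "n^2 / (2*lam) - 4 * a * n^2 - n^2 / (4*lam) = n^2 * (1 - 16 * a * lam) / (4*lam)"
    using lam by (simp add: field_simps)
  also have "\<dots> \<ge> 0" using lam by simp
  finally have "n^2 / (2*lam) - 4 * a * n^2 \<ge> n^2 / (4*lam)" by simp
  moreover have "n^2 / (4*lam) \<ge> \<delta>^2 / (16*lam)"
  proof -
    have "(\<delta>/2)^2 \<le> n^2" using n \<delta> by (intro power_mono) auto
    then have "(\<delta>/2)^2 / (4*lam) \<le> n^2 / (4*lam)" using lam by (intro divide_right_mono) auto
    then show ?thesis by (simp add: power_divide)
  qed
  moreover have "\<delta>^2 / (16*lam) \<ge> M - b"
  proof -
    have "lam * (M - b) \<le> lam * \<bar>M - b\<bar>" using lam by (intro mult_left_mono) auto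
    moreover have "lam * (16 * (\<bar>M - b\<bar> + 1)) = 16 * (lam * \<bar>M - b\<bar>) + 16 * lam"
      "(M - b) * (16 * lam) = 16 * (lam * (M - b))" by (simp_all add: algebra_simps)
    ultimately have "(M - b) * (16 * lam) \<le> \<delta>^2" using small lam by linarith
    then show ?thesis using lam by (simp add: pos_le_divide_eq)
  qed
  ultimately show ?thesis by linarith
qed

lemma prox_bounded_far_bound:
  fixes f :: "'a::real_normed_vector \<Rightarrow> ereal"
  assumes "prox_bounded f" and \<delta>: "\<delta> > 0"
  obtains l where "l > 0" "\<And>lam z w. 0 < lam \<Longrightarrow> lam < l \<Longrightarrow> norm (z - x) \<le> \<delta>/2 \<Longrightarrow>
      norm (w - x) \<ge> \<delta> \<Longrightarrow> ereal M \<le> f w + ereal (norm (w - z)^2 / (2*lam))"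
proof -
  obtain a b where a: "a \<ge> 0"
    and ab: "\<And>w. f w \<ge> ereal (b - a * norm (w - x)^2)"
    using prox_bounded_minorant[OF assms(1)] by blast
  define l where "l = min (1 / (16*a + 1)) (\<delta>^2 / (16 * (\<bar>M - b\<bar> + 1)))"
  have pos: "16 * (\<bar>M - b\<bar> + 1) > 0" by (intro mult_pos_pos) (simp_all add: add_nonneg_pos)
  then have "\<delta>^2 / (16 * (\<bar>M - b\<bar> + 1)) > 0" using \<delta> by simp
  then have "l > 0" using a by (simp add: l_def)
  moreover have "ereal M \<le> f w + ereal (norm (w - z)^2 / (2*lam))"
    if lam: "0 < lam" "lam < l" and z: "norm (z - x) \<le> \<delta>/2" and w: "norm (w - x) \<ge> \<delta>" for lam z w
  proof -
    define n where "n = norm (w - z)"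
    have "norm (w - x) \<le> n + norm (z - x)" unfolding n_def using norm_triangle_ineq[of "w - z" "z - x"] by simp
    then have n: "\<delta>/2 \<le> n" "norm (w - x) \<le> 2 * n" using z w by linarith+
    have "norm (w - x)^2 \<le> (2 * n)^2" using n by (intro power_mono) auto
    then have "a * norm (w - x)^2 \<le> a * (4 * n^2)" using a by (intro mult_left_mono) simp_all
    then have "a * norm (w - x)^2 \<le> 4 * a * n^2" by simp
    moreover have "16 * a * lam \<le> 1"
    proof -
      have "lam * (16 * a + 1) < 1" using lam a by (simp add: l_def pos_less_divide_eq)
      then show ?thesis using lam by (simp add: algebra_simps)
    qed
    moreover have "lam * (16 * (\<bar>M - b\<bar> + 1)) < \<delta>^2"
      using lam pos by (simp add: l_def pos_less_divide_eq)
    ultimately have "M \<le> b - a * norm (w - x)^2 + n^2 / (2*lam)"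
      using far_quadratic_lower_bound[OF a lam(1) _ \<delta> n(1)] by fastforce
    then have "ereal M \<le> ereal (b - a * norm (w - x)^2) + ereal (n^2 / (2*lam))" by simp
    also have "\<dots> \<le> f w + ereal (n^2 / (2*lam))" by (rule add_right_mono[OF ab])
    finally show ?thesis unfolding n_def .
  qed
  ultimately show thesis using that by blast
qed


section \<open>Variational convexity implies prox-regularity and a locally convex envelope\<close>

text \<open>Variational convexity, with both neighbourhoods shrunk to balls of radius delta.\<close>
locale var_convex_witness =
  fixes \<phi> \<psi> :: "'a::{real_inner,complete_space} \<Rightarrow> ereal" and xb vb :: 'a and fx \<delta> :: real
  assumes delta_pos: "\<delta> > 0"
    and convex: "econvex_on UNIV \<psi>"
    and base: "\<phi> xb = ereal fx" "\<psi> xb = ereal fx"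
    and sub: "vb \<in> lim_subdiff \<phi> xb"
    and below: "\<And>x. norm (x - xb) \<le> \<delta> \<Longrightarrow> lsc_pt \<psi> x \<and> \<psi> x \<le> \<phi> x"
    and graph_sub: "\<And>u us. norm (u - xb) \<le> \<delta> \<Longrightarrow> norm (us - vb) \<le> \<delta> \<Longrightarrow> \<phi> u < ereal (fx + \<delta>) \<Longrightarrow>
        us \<in> lim_subdiff \<phi> u \<Longrightarrow> us \<in> lim_subdiff \<psi> u \<and> \<phi> u = \<psi> u"
    and graph_sup: "\<And>u us. norm (u - xb) \<le> \<delta> \<Longrightarrow> norm (us - vb) \<le> \<delta> \<Longrightarrow>
        us \<in> lim_subdiff \<psi> u \<Longrightarrow> \<phi> u = \<psi> u"

lemma var_convex_imp_witness:
  fixes \<phi> :: "'a::{real_inner,complete_space} \<Rightarrow> ereal"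
  assumes vc: "var_convex \<phi> xb vb" and sub: "vb \<in> lim_subdiff \<phi> xb" and fx: "\<phi> xb = ereal fx"
  obtains \<psi> \<delta> where "var_convex_witness \<phi> \<psi> xb vb fx \<delta>"
proof -
  obtain U V g \<epsilon> where UV: "open U" "convex U" "xb \<in> U" "open V" "convex V" "vb \<in> V"
    and "\<epsilon> > 0" and gcv: "econvex_on U g" and glsc: "\<forall>x\<in>U. lsc_pt (restr U g) x"
    and gle: "\<forall>x\<in>U. g x \<le> \<phi> x"
    and EQ: "\<forall>x v. (x \<in> U \<and> \<phi> x < \<phi> xb + ereal \<epsilon> \<and> v \<in> V \<and> v \<in> lim_subdiff \<phi> x)
           \<longleftrightarrow> (x \<in> U \<and> v \<in> V \<and> v \<in> lim_subdiff (restr U g) x)"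
    and EQ2: "\<forall>x v. x \<in> U \<and> \<phi> x < \<phi> xb + ereal \<epsilon> \<and> v \<in> V \<and> v \<in> lim_subdiff \<phi> x
           \<longrightarrow> \<phi> x = g x"
    using vc unfolding var_convex_def by blast
  obtain e1 e2 where e: "e1 > 0" "ball xb e1 \<subseteq> U" "e2 > 0" "ball vb e2 \<subseteq> V"
    using UV open_contains_ball by meson
  define \<delta> where "\<delta> = min (min e1 e2) \<epsilon> / 2"
  have \<delta>: "\<delta> > 0" "\<delta> \<le> \<epsilon>" using e \<open>\<epsilon> > 0\<close> by (auto simp: \<delta>_def)
  have inU: "x \<in> U" if "norm (x - xb) \<le> \<delta>" for x
    using that e \<open>\<epsilon> > 0\<close> by (intro subsetD[OF e(2)]) (auto simp: \<delta>_def dist_norm norm_minus_commute)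
  have inV: "v \<in> V" if "norm (v - vb) \<le> \<delta>" for v
    using that e \<open>\<epsilon> > 0\<close> by (intro subsetD[OF e(4)]) (auto simp: \<delta>_def dist_norm norm_minus_commute)
  have level: "\<phi> u < \<phi> xb + ereal \<epsilon>" if "\<phi> u < ereal (fx + \<delta>)" for u
    using that \<delta> fx by (auto elim: less_le_trans)
  have "var_convex_witness \<phi> (restr U g) xb vb fx \<delta>"
  proof
    show "econvex_on UNIV (restr U g)" by (rule econvex_on_UNIV_restr[OF gcv])
    have "\<phi> xb < \<phi> xb + ereal \<epsilon>" using fx \<open>\<epsilon> > 0\<close> by simp
    then have "\<phi> xb = g xb" using EQ2 UV sub by blast
    then show "restr U g xb = ereal fx" using fx UV by (simp add: restr_def)
    show "lsc_pt (restr U g) x \<and> restr U g x \<le> \<phi> x" if "norm (x - xb) \<le> \<delta>" for x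
      using glsc gle inU[OF that] by (simp add: restr_def)
    show "us \<in> lim_subdiff (restr U g) u \<and> \<phi> u = restr U g u"
      if "norm (u - xb) \<le> \<delta>" "norm (us - vb) \<le> \<delta>" "\<phi> u < ereal (fx + \<delta>)" "us \<in> lim_subdiff \<phi> u" for u us
    proof -
      have "u \<in> U" "us \<in> V" "\<phi> u < \<phi> xb + ereal \<epsilon>" using inU inV level that by auto
      then have "us \<in> lim_subdiff (restr U g) u" "\<phi> u = g u" using EQ EQ2 that(4) by blast+
      then show ?thesis using \<open>u \<in> U\<close> by (simp add: restr_def)
    qed
    show "\<phi> u = restr U g u"
      if "norm (u - xb) \<le> \<delta>" "norm (us - vb) \<le> \<delta>" "us \<in> lim_subdiff (restr U g) u" for u us
    proof -
      have "u \<in> U" "us \<in> V" using inU inV that by auto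
      then have "\<phi> u = g u" using EQ EQ2 that(3) by blast
      then show ?thesis using \<open>u \<in> U\<close> by (simp add: restr_def)
    qed
  qed (use \<delta> fx sub in auto)
  then show thesis by (rule that)
qed

context var_convex_witness
begin

lemma affine_minorant: "\<psi> y \<ge> ereal (fx + inner vb (y - xb))"
proof -
  have "vb \<in> lim_subdiff \<psi> xb" using graph_sub[of xb vb] sub base delta_pos by simp
  then obtain a where "\<psi> xb = ereal a" "\<And>y. \<psi> y \<ge> ereal (a + inner vb (y - xb))"
    using lim_subdiff_convex_minorant[OF convex] by blast
  then show ?thesis using base(2) by simp
qed

lemma prox_regular: "prox_regular \<phi> xb vb"
proof -
  have "\<phi> u + ereal (inner us (x - u)) - ereal (0 / 2 * norm (x - u)^2) \<le> \<phi> x"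
    if x: "norm (x - xb) \<le> \<delta>" and u: "norm (u - xb) \<le> \<delta>" "norm (us - vb) \<le> \<delta>"
      "\<phi> u < \<phi> xb + ereal \<delta>" "us \<in> lim_subdiff \<phi> u" for x u us
  proof -
    have "us \<in> lim_subdiff \<psi> u" and \<phi>u: "\<phi> u = \<psi> u" using graph_sub[OF u(1,2)] u base by auto
    then obtain a where a: "\<psi> u = ereal a" "\<And>y. \<psi> y \<ge> ereal (a + inner us (y - u))"
      using lim_subdiff_convex_minorant[OF convex] by blast
    have "ereal (a + inner us (x - u)) \<le> \<phi> x" using a(2)[of x] below[OF x] by (blast intro: order_trans)
    then show ?thesis using \<phi>u a(1) by simp
  qed
  then show ?thesis unfolding prox_regular_def
    by (intro exI[of _ \<delta>] exI[of _ "0::real"]) (use delta_pos in auto)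
qed

lemma norm_near_base:
  assumes "norm (z - (xb + lam *\<^sub>R vb)) < lam * min 1 (\<delta>/2)" "lam > 0"
  shows "norm (z - xb) \<le> lam * (1 + norm vb)"
proof -
  have "norm (z - xb) \<le> norm (z - (xb + lam *\<^sub>R vb)) + norm (lam *\<^sub>R vb)"
    using norm_triangle_ineq[of "z - (xb + lam *\<^sub>R vb)" "lam *\<^sub>R vb"] by simp
  moreover have "lam * min 1 (\<delta>/2) \<le> lam" using mult_left_mono[of "min 1 (\<delta>/2)" 1 lam] assms(2) by simp
  moreover have "norm (lam *\<^sub>R vb) = lam * norm vb" using assms(2) by simp
  ultimately have "norm (z - xb) \<le> lam + lam * norm vb" using assms(1) by linarith
  then show ?thesis by (simp add: distrib_left)
qed

lemma prox_point_near:
  assumes lam: "0 < lam" "lam \<le> 1" "lam * (1 + norm vb) \<le> \<delta>/2"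
    and far: "\<And>w. norm (w - xb) \<ge> \<delta> \<Longrightarrow>
      ereal (fx + (1 + norm vb)^2/2) \<le> \<phi> w + ereal (norm (w - z)^2 / (2*lam))"
    and z: "norm (z - (xb + lam *\<^sub>R vb)) < lam * min 1 (\<delta>/2)"
  obtains p where "\<bar>\<psi> p\<bar> \<noteq> \<infinity>" "prox_point lam \<psi> z p" "prox_point lam \<phi> z p" "\<phi> p = \<psi> p"
proof -
  define c where "c = z - lam *\<^sub>R vb"
  have xc: "norm (xb - c) < lam * min 1 (\<delta>/2)" using z by (simp add: c_def norm_minus_commute algebra_simps)
  have near: "norm (p - xb) < \<delta>" if "norm (p - c) \<le> norm (xb - c)" for p
  proof -
    have "norm (p - xb) \<le> norm (p - c) + norm (xb - c)" using norm_triangle_ineq4[of "p - c" "xb - c"] by simp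
    also have "\<dots> < 2 * (lam * min 1 (\<delta>/2))" using that xc by simp
    also have "\<dots> \<le> \<delta>" using lam delta_pos by (simp add: min_def mult_left_le_one_le)
    finally show ?thesis .
  qed
  have "lsc_pt \<psi> p" if "norm (p - c) \<le> norm (xb - c)" for p
    using below near[OF that] by simp
  then obtain p where p: "\<bar>\<psi> p\<bar> \<noteq> \<infinity>" "norm (p - c) \<le> norm (xb - c)" "prox_point lam \<psi> z p"
    using prox_point_exists_convex[OF convex base(2) affine_minorant lam(1), of z] unfolding c_def by blast
  obtain a where a: "\<psi> p = ereal a" using p(1) by fastforce
  have "(1/lam) *\<^sub>R (z - p) - vb = (1/lam) *\<^sub>R (c - p)" using lam by (simp add: c_def algebra_simps)
  then have "norm ((1/lam) *\<^sub>R (z - p) - vb) = norm (p - c) / lam"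
    using lam by (simp add: norm_minus_commute)
  also have "\<dots> \<le> \<delta>"
  proof -
    have "lam * min 1 (\<delta>/2) \<le> lam * (\<delta>/2)" using lam(1) by (intro mult_left_mono) auto
    moreover have "lam * (\<delta>/2) = (\<delta> * lam)/2" "0 < \<delta> * lam" using lam(1) delta_pos by simp_all
    ultimately have "norm (p - c) \<le> \<delta> * lam" using p(2) xc by linarith
    then show ?thesis using lam(1) by (simp add: pos_divide_le_eq)
  qed
  finally have "\<phi> p = \<psi> p"
    using graph_sup[OF _ _ prox_point_imp_lim_subdiff[OF lam(1) a p(3)]] near[OF p(2)] by simp
  moreover have "prox_point lam \<phi> z p"
  proof (rule prox_point_transfer[where \<phi>=\<phi> and S="cball xb \<delta>", OF p(3) \<open>\<phi> p = \<psi> p\<close>])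
    show "\<psi> w \<le> \<phi> w" if "w \<in> cball xb \<delta>" for w
      using below that by (simp add: dist_norm norm_minus_commute)
    show "\<psi> p + ereal (norm (p - z)^2 / (2*lam)) \<le> \<phi> w + ereal (norm (w - z)^2 / (2*lam))"
      if "w \<notin> cball xb \<delta>" for w
    proof -
      have "norm (z - xb) \<le> lam * (1 + norm vb)" using norm_near_base[OF z lam(1)] .
      then have "norm (xb - z)^2 / (2*lam) \<le> (lam * (1 + norm vb))^2 / (2*lam)"
        using lam by (intro divide_right_mono power_mono) (auto simp: norm_minus_commute)
      also have "\<dots> = lam * ((1 + norm vb)^2 / 2)"
        using lam by (simp add: power_mult_distrib power2_eq_square)
      also have "\<dots> \<le> (1 + norm vb)^2 / 2"
        using lam by (intro mult_left_le_one_le) auto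
      finally have "fx + norm (xb - z)^2 / (2*lam) \<le> fx + (1 + norm vb)^2/2" by simp
      with p(3)[unfolded prox_point_def, rule_format, of xb] base(2)
      have "\<psi> p + ereal (norm (p - z)^2 / (2*lam)) \<le> ereal (fx + (1 + norm vb)^2/2)"
        by (auto elim: order_trans)
      then show ?thesis using far[of w] that by (auto simp: dist_norm norm_minus_commute elim: order_trans)
    qed
  qed
  ultimately show thesis using that[OF p(1,3)] by simp
qed

lemma moreau_env_locally_convex:
  assumes pb: "prox_bounded \<phi>"
  shows "\<exists>lam0>0. \<forall>lam. 0 < lam \<and> lam < lam0 \<longrightarrow>
    locally_convex_around (moreau_env lam \<phi>) (xb + lam *\<^sub>R vb)"
proof -
  obtain l where l: "l > 0" and far: "\<And>lam z w. 0 < lam \<Longrightarrow> lam < l \<Longrightarrow> norm (z - xb) \<le> \<delta>/2 \<Longrightarrow>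
      norm (w - xb) \<ge> \<delta> \<Longrightarrow> ereal (fx + (1 + norm vb)^2/2) \<le> \<phi> w + ereal (norm (w - z)^2 / (2*lam))"
    using prox_bounded_far_bound[OF pb delta_pos] by blast
  define lam0 where "lam0 = min (min 1 l) (\<delta> / (2 * (1 + norm vb)))"
  have "lam0 > 0" using l delta_pos by (simp add: lam0_def add_pos_nonneg)
  moreover have "locally_convex_around (moreau_env lam \<phi>) (xb + lam *\<^sub>R vb)"
    if lam: "0 < lam" "lam < lam0" for lam
  proof -
    define W where "W = ball (xb + lam *\<^sub>R vb) (lam * min 1 (\<delta>/2))"
    have lam': "lam \<le> 1" "lam < l" "lam * (1 + norm vb) \<le> \<delta>/2"
      using lam by (auto simp: lam0_def pos_less_divide_eq add_pos_nonneg algebra_simps)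
    have prox: "\<exists>p. \<bar>\<psi> p\<bar> \<noteq> \<infinity> \<and> prox_point lam \<psi> z p \<and> prox_point lam \<phi> z p \<and> \<phi> p = \<psi> p"
      if "z \<in> W" for z
    proof -
      have zW: "norm (z - (xb + lam *\<^sub>R vb)) < lam * min 1 (\<delta>/2)"
        using that by (simp add: W_def dist_norm norm_minus_commute)
      have zb: "norm (z - xb) \<le> \<delta>/2" using norm_near_base[OF zW lam(1)] lam'(3) by linarith
      obtain p where "\<bar>\<psi> p\<bar> \<noteq> \<infinity>" "prox_point lam \<psi> z p" "prox_point lam \<phi> z p" "\<phi> p = \<psi> p"
        by (rule prox_point_near[OF lam(1) lam'(1,3) far[OF lam(1) lam'(2) zb] zW])
      then show ?thesis by (intro exI[of _ p]) simp
    qed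
    have "\<exists>p. \<bar>\<psi> p\<bar> \<noteq> \<infinity> \<and> prox_point lam \<psi> z p" if "z \<in> W" for z
      using prox[OF that] by meson
    then have "econvex_on W (moreau_env lam \<psi>)"
      by (intro moreau_env_convex_if_prox_points[OF convex lam(1)]) (auto simp: W_def)
    moreover have "moreau_env lam \<psi> z = moreau_env lam \<phi> z" if zW: "z \<in> W" for z
    proof -
      obtain p where "prox_point lam \<psi> z p" "prox_point lam \<phi> z p" "\<phi> p = \<psi> p"
        using prox[OF zW] by meson
      then show ?thesis using moreau_env_prox_point[of lam \<psi> z p] moreau_env_prox_point[of lam \<phi> z p] by simp
    qed
    ultimately have "econvex_on W (moreau_env lam \<phi>)" by (rule econvex_on_cong[rotated])
    moreover have "xb + lam *\<^sub>R vb \<in> W" using lam delta_pos by (simp add: W_def)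
    ultimately show ?thesis unfolding locally_convex_around_def W_def by blast
  qed
  ultimately show ?thesis by blast
qed

end


section \<open>Prox-regularity and a locally convex envelope imply variational convexity\<close>

locale prox_regular_env_convex =
  fixes \<phi> :: "'a::{real_inner,complete_space} \<Rightarrow> ereal" and xb vb :: 'a
    and fx \<epsilon>0 r \<epsilon>v M lam \<kappa> :: real
  assumes lsc: "lsc_fun \<phi>"
    and base: "\<phi> xb = ereal fx"
    and sub: "vb \<in> lim_subdiff \<phi> xb"
    and eps: "0 < \<epsilon>0" "0 \<le> r"
    and prox_reg: "\<And>x u us. norm (x - xb) \<le> \<epsilon>0 \<Longrightarrow> us \<in> lim_subdiff \<phi> u \<Longrightarrow> norm (u - xb) \<le> \<epsilon>0 \<Longrightarrow>
        norm (us - vb) \<le> \<epsilon>0 \<Longrightarrow> \<phi> u < \<phi> xb + ereal \<epsilon>0 \<Longrightarrow>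
        \<phi> x \<ge> \<phi> u + ereal (inner us (x - u)) - ereal (r / 2 * norm (x - u)^2)"
    and level: "0 < \<epsilon>v" "\<epsilon>v \<le> \<epsilon>0" "\<epsilon>v \<le> 1/2"
    and far: "\<And>z w. norm (z - xb) \<le> \<epsilon>0/2 \<Longrightarrow> norm (w - xb) \<ge> \<epsilon>0 \<Longrightarrow>
        ereal M \<le> \<phi> w + ereal (norm (w - z)^2 / (2*lam))"
    and M: "fx + 1 + (norm vb + 1)^2/2 \<le> M"
    and lam: "0 < lam" "lam \<le> 1" "lam * r \<le> 1/2" "lam * (norm vb + 1) \<le> \<epsilon>0/4"
      "lam * (norm vb + 1)^2 < \<epsilon>v"
    and kappa: "0 < \<kappa>" "\<kappa> \<le> \<epsilon>0/4"
    and env_convex: "econvex_on (ball (xb + lam *\<^sub>R vb) \<kappa>) (moreau_env lam \<phi>)"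
begin

lemma near_base:
  assumes "norm (y - (xb + lam *\<^sub>R vb)) < \<kappa>"
  shows "norm (y - xb) \<le> \<epsilon>0/2"
proof -
  have "norm (y - xb) \<le> norm (y - (xb + lam *\<^sub>R vb)) + lam * norm vb"
    using norm_triangle_ineq[of "y - (xb + lam *\<^sub>R vb)" "lam *\<^sub>R vb"] lam(1) by simp
  moreover have "lam * (norm vb + 1) = lam * norm vb + lam" by (simp add: algebra_simps)
  ultimately show ?thesis using assms kappa lam by linarith
qed

lemma not_minf_near: "norm (u - xb) \<le> \<epsilon>0 \<Longrightarrow> \<phi> u \<noteq> - \<infinity>"
  using prox_reg[where x=u and u=xb and us=vb] sub eps base by auto

lemma moreau_env_finite:
  assumes y: "y \<in> ball (xb + lam *\<^sub>R vb) \<kappa>"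
  shows "\<bar>moreau_env lam \<phi> y\<bar> \<noteq> \<infinity>"
proof -
  have "norm (y - (xb + lam *\<^sub>R vb)) < \<kappa>" using y by (simp add: dist_norm norm_minus_commute)
  then have yb: "norm (y - xb) \<le> \<epsilon>0/2" by (rule near_base)
  define lo where "lo = min M (fx - norm vb * \<epsilon>0 - r/2 * \<epsilon>0^2)"
  have "moreau_env lam \<phi> y \<le> ereal (fx + norm (xb - y)^2 / (2*lam))"
    using moreau_env_le[of lam \<phi> y xb] base by simp
  moreover have "ereal lo \<le> moreau_env lam \<phi> y"
    unfolding moreau_env_def
  proof (rule INF_greatest)
    fix w
    show "ereal lo \<le> \<phi> w + ereal (norm (w - y)^2 / (2*lam))"
    proof (cases "norm (w - xb) \<ge> \<epsilon>0")
      case True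
      have "ereal lo \<le> ereal M" by (simp add: lo_def)
      then show ?thesis using far[OF yb True] by (rule order_trans)
    next
      case False
      have "\<bar>inner vb (w - xb)\<bar> \<le> norm vb * \<epsilon>0"
        using Cauchy_Schwarz_ineq2[of vb "w - xb"] mult_left_mono[of "norm (w - xb)" \<epsilon>0 "norm vb"] False
        by simp
      moreover have "r/2 * norm (w - xb)^2 \<le> r/2 * \<epsilon>0^2"
        using False eps by (intro mult_left_mono power_mono) auto
      ultimately have "fx - norm vb * \<epsilon>0 - r/2 * \<epsilon>0^2 \<le> fx + inner vb (w - xb) - r/2 * norm (w - xb)^2"
        by (simp add: abs_le_iff)
      then have "ereal lo \<le> ereal (fx + inner vb (w - xb) - r/2 * norm (w - xb)^2)"
        by (simp add: lo_def min_le_iff_disj)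
      also have "\<dots> \<le> \<phi> w" using prox_reg[where x=w and u=xb and us=vb] False sub eps base by simp
      also have "\<dots> \<le> \<phi> w + ereal (norm (w - y)^2 / (2*lam))" using lam by (simp add: ereal_le_add_self)
      finally show ?thesis .
    qed
  qed
  ultimately show ?thesis by auto
qed

definition env_real :: "'a \<Rightarrow> real" where
  "env_real y = real_of_ereal (moreau_env lam \<phi> y)"

lemma moreau_env_env_real: "y \<in> ball (xb + lam *\<^sub>R vb) \<kappa> \<Longrightarrow> moreau_env lam \<phi> y = ereal (env_real y)"
  using moreau_env_finite by (simp add: env_real_def ereal_real')

lemma convex_on_env_real: "convex_on (ball (xb + lam *\<^sub>R vb) \<kappa>) env_real"
  by (rule econvex_on_imp_convex_on[OF env_convex moreau_env_env_real])

definition rad :: real where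
  "rad = min (\<kappa>/2) 1"

lemma rad: "0 < rad" "rad \<le> \<kappa>/2" "rad \<le> 1" "rad \<le> \<epsilon>0"
  using kappa eps by (auto simp: rad_def)

lemma shift_in_ball:
  assumes "norm (x - xb) < rad" "norm (us - vb) < rad"
  shows "x + lam *\<^sub>R us \<in> ball (xb + lam *\<^sub>R vb) \<kappa>"
proof -
  have "norm (x + lam *\<^sub>R us - (xb + lam *\<^sub>R vb)) \<le> norm (x - xb) + norm (lam *\<^sub>R (us - vb))"
    using norm_triangle_ineq[of "x - xb" "lam *\<^sub>R (us - vb)"] by (simp add: algebra_simps)
  moreover have "lam * norm (us - vb) \<le> 1 * rad" using assms lam by (intro mult_mono) auto
  ultimately show ?thesis using assms rad lam(1) by (simp add: dist_norm norm_minus_commute)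
qed

definition loc_graph :: "('a \<times> 'a) set" where
  "loc_graph = {(u, us). norm (u - xb) < rad \<and> \<phi> u < ereal (fx + \<epsilon>v) \<and>
     norm (us - vb) < rad \<and> us \<in> lim_subdiff \<phi> u}"

lemma base_in_loc_graph: "(xb, vb) \<in> loc_graph"
  using rad level sub base by (simp add: loc_graph_def)

lemma loc_graph_real:
  assumes "(u, us) \<in> loc_graph"
  shows "\<phi> u = ereal (real_of_ereal (\<phi> u))"
proof -
  have "\<phi> u < ereal (fx + \<epsilon>v)" "norm (u - xb) \<le> \<epsilon>0"
    using assms rad by (auto simp: loc_graph_def)
  then show ?thesis using not_minf_near by (cases "\<phi> u") auto
qed

lemma loc_graph_norm: "(u, us) \<in> loc_graph \<Longrightarrow> norm us \<le> norm vb + 1"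
  using norm_triangle_ineq[of vb "us - vb"] rad by (auto simp: loc_graph_def)

text \<open>Prox-regularity makes u the prox point of u + lam us, once lam r is small.\<close>
lemma prox_point_loc_graph:
  assumes A: "(u, us) \<in> loc_graph"
  shows "prox_point lam \<phi> (u + lam *\<^sub>R us) u"
  unfolding prox_point_def
proof
  fix w
  define z where "z = u + lam *\<^sub>R us"
  obtain fu where fu: "\<phi> u = ereal fu" using loc_graph_real[OF A] by blast
  have u: "norm (u - xb) < rad" "\<phi> u < ereal (fx + \<epsilon>v)" "norm (us - vb) < rad" "us \<in> lim_subdiff \<phi> u"
    using A by (auto simp: loc_graph_def)
  have qz: "norm (w - z)^2 / (2*lam) = norm (w - u)^2 / (2*lam) - inner us (w - u) + lam * norm us^2 / 2"
    using norm_diff_add_power2[of w u "lam *\<^sub>R us"] lam(1)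
    by (simp add: z_def field_simps power_mult_distrib power2_eq_square inner_commute)
  have qu: "norm (u - z)^2 / (2*lam) = lam * norm us^2 / 2"
    using lam(1) by (simp add: z_def power_mult_distrib power2_eq_square)
  show "\<phi> u + ereal (norm (u - z)^2 / (2*lam)) \<le> \<phi> w + ereal (norm (w - z)^2 / (2*lam))"
  proof (cases "norm (w - xb) \<ge> \<epsilon>0")
    case True
    have "norm (z - (xb + lam *\<^sub>R vb)) < \<kappa>"
      using shift_in_ball[OF u(1,3)] by (simp add: z_def dist_norm norm_minus_commute)
    then have "norm (z - xb) \<le> \<epsilon>0/2" by (rule near_base)
    moreover have "fu + lam * norm us^2 / 2 \<le> M"
    proof -
      have "norm us^2 \<le> (norm vb + 1)^2" using loc_graph_norm[OF A] by (intro power_mono) auto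
      moreover have "lam * norm us^2 \<le> norm us^2" using lam by (intro mult_left_le_one_le) auto
      ultimately have "lam * norm us^2 \<le> (norm vb + 1)^2" by linarith
      then show ?thesis using u(2) fu level M by simp
    qed
    ultimately show ?thesis using far[of z w] True fu qu by (auto elim: order_trans[rotated])
  next
    case False
    have "\<phi> u < \<phi> xb + ereal \<epsilon>0" using u(2) level base by (auto elim: less_le_trans)
    then have "\<phi> w \<ge> ereal (fu + inner us (w - u) - r / 2 * norm (w - u)^2)"
      using prox_reg[where x=w and u=u and us=us] False u rad fu by simp
    moreover have "r / 2 * norm (w - u)^2 \<le> norm (w - u)^2 / (2*lam)"
    proof -
      have "r \<le> 1 / lam" using lam by (simp add: field_simps)
      then have "r / 2 * norm (w - u)^2 \<le> (1 / lam) / 2 * norm (w - u)^2" by (intro mult_right_mono) auto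
      then show ?thesis by simp
    qed
    ultimately show ?thesis using fu qu qz by (cases "\<phi> w") auto
  qed
qed

lemma loc_graph_subgradient_ineq:
  assumes A: "(u, us) \<in> loc_graph" and x: "norm (x - xb) < rad"
  shows "\<phi> x \<ge> ereal (real_of_ereal (\<phi> u) + inner us (x - u))"
proof -
  have u: "norm (u - xb) < rad" "norm (us - vb) < rad" using A by (auto simp: loc_graph_def)
  show ?thesis
    using moreau_env_convex_imp_subgradient_ineq[OF lam(1) open_ball convex_on_env_real moreau_env_env_real
        loc_graph_real[OF A] prox_point_loc_graph[OF A] shift_in_ball[OF u] shift_in_ball[OF x u(2)]] .
qed

definition minorant :: "'a \<Rightarrow> ereal" where
  "minorant = sup_affine (\<lambda>(u, us). real_of_ereal (\<phi> u)) loc_graph"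

lemma minorant_upper:
  assumes "(u, us) \<in> loc_graph"
  shows "ereal (real_of_ereal (\<phi> u) + inner us (y - u)) \<le> minorant y"
  unfolding minorant_def using sup_affine_upper[OF assms, of "\<lambda>(u, us). real_of_ereal (\<phi> u)" y] by simp

lemma minorant_le: "norm (x - xb) < rad \<Longrightarrow> minorant x \<le> \<phi> x"
  unfolding minorant_def by (rule sup_affine_least) (simp add: loc_graph_subgradient_ineq)

lemma minorant_eq:
  assumes "(u, us) \<in> loc_graph"
  shows "minorant u = \<phi> u"
proof (rule antisym)
  show "minorant u \<le> \<phi> u" using assms by (intro minorant_le) (simp add: loc_graph_def)
  show "\<phi> u \<le> minorant u" using minorant_upper[OF assms, of u] loc_graph_real[OF assms] by simp
qed

lemma minorant_finite: "\<bar>minorant y\<bar> \<noteq> \<infinity>"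
  unfolding minorant_def
proof (rule sup_affine_finite[OF base_in_loc_graph])
  show "norm us \<le> norm vb + 1" if "(u, us) \<in> loc_graph" for u us
    using loc_graph_norm[OF that] .
  show "(case (u, us) of (u, us) \<Rightarrow> real_of_ereal (\<phi> u)) + inner us (xb - u) \<le> fx"
    if "(u, us) \<in> loc_graph" for u us
    using loc_graph_subgradient_ineq[OF that, of xb] rad base by simp
qed

lemma minorant_convex: "econvex_on UNIV minorant"
  unfolding minorant_def by (rule sup_affine_convex)

definition minorant_real :: "'a \<Rightarrow> real" where
  "minorant_real y = real_of_ereal (minorant y)"

lemma minorant_eq_real: "minorant y = ereal (minorant_real y)"
  using minorant_finite by (simp add: minorant_real_def ereal_real')

lemma convex_on_minorant_real: "convex_on UNIV minorant_real"
  by (rule econvex_on_imp_convex_on[OF minorant_convex]) (simp add: minorant_eq_real)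

text \<open>Prox points of z near xb + lam vb stay near xb: compare with the candidate xb and use
  prox-regularity at (xb, vb); the far bound excludes prox points at distance eps0.\<close>
lemma prox_point_localized:
  assumes z: "norm (z - (xb + lam *\<^sub>R vb)) \<le> lam" and prox: "prox_point lam \<phi> z p"
  shows "norm (p - (z - lam *\<^sub>R vb)) \<le> 3 * norm (z - (xb + lam *\<^sub>R vb))"
    and "\<phi> p + ereal (norm (p - z)^2 / (2*lam)) \<le> ereal (fx + lam * (norm vb + 1)^2 / 2)"
proof -
  define \<rho> where "\<rho> = norm (z - (xb + lam *\<^sub>R vb))"
  define c where "c = z - lam *\<^sub>R vb"
  have \<rho>c: "norm (xb - c) = \<rho>" by (simp add: c_def \<rho>_def norm_minus_commute algebra_simps)
  have "norm (z - xb) \<le> \<rho> + lam * norm vb"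
    using norm_triangle_ineq[of "z - (xb + lam *\<^sub>R vb)" "lam *\<^sub>R vb"] lam(1) by (simp add: \<rho>_def)
  then have zx: "norm (z - xb) \<le> lam * (norm vb + 1)" using z by (simp add: \<rho>_def algebra_simps)
  have pz: "\<phi> p + ereal (norm (p - z)^2 / (2*lam)) \<le> ereal (fx + norm (xb - z)^2 / (2*lam))"
    using prox base unfolding prox_point_def by (metis plus_ereal.simps(1))
  have "norm (xb - z)^2 / (2*lam) \<le> (lam * (norm vb + 1))^2 / (2*lam)"
    using zx lam(1) by (intro divide_right_mono power_mono) (auto simp: norm_minus_commute)
  also have "\<dots> = lam * (norm vb + 1)^2 / 2" using lam(1) by (simp add: power2_eq_square)
  finally have xz: "norm (xb - z)^2 / (2*lam) \<le> lam * (norm vb + 1)^2 / 2" .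
  with pz show bound: "\<phi> p + ereal (norm (p - z)^2 / (2*lam)) \<le> ereal (fx + lam * (norm vb + 1)^2 / 2)"
    by (auto elim: order_trans)
  have "norm (p - xb) < \<epsilon>0"
  proof (rule ccontr)
    assume "\<not> ?thesis"
    moreover have "norm (z - xb) \<le> \<epsilon>0/2" using zx lam(4) eps(1) by linarith
    ultimately have "ereal M \<le> \<phi> p + ereal (norm (p - z)^2 / (2*lam))" using far[of z p] by simp
    moreover have "lam * (norm vb + 1)^2 \<le> (norm vb + 1)^2" using lam by (intro mult_left_le_one_le) auto
    moreover have "M \<le> fx + lam * (norm vb + 1)^2 / 2"
      using order_trans[OF calculation(1) bound] by simp
    ultimately show False using M by linarith
  qed
  moreover obtain a where a: "\<phi> p = ereal a" using bound not_minf_near calculation by (cases "\<phi> p") auto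
  ultimately have pr: "a \<ge> fx + inner vb (p - xb) - r/2 * norm (p - xb)^2"
    using prox_reg[where x=p and u=xb and us=vb] sub eps base by simp
  have "norm (p - z)^2 / (2*lam) + inner vb (p - xb) - r/2 * norm (p - xb)^2 \<le> norm (xb - z)^2 / (2*lam)"
    using pz a pr by simp
  then have "(norm (p - z)^2 - norm (xb - z)^2) / (2*lam) \<le> r/2 * norm (p - xb)^2 - inner vb (p - xb)"
    by (simp add: diff_divide_distrib)
  then have "norm (p - z)^2 - norm (xb - z)^2 \<le> (r/2 * norm (p - xb)^2 - inner vb (p - xb)) * (2*lam)"
    using lam(1) by (simp add: pos_divide_le_eq)
  moreover have "(r/2 * norm (p - xb)^2 - inner vb (p - xb)) * (2*lam)
      = lam * r * norm (p - xb)^2 - 2 * lam * inner vb (p - xb)" by (simp add: algebra_simps)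
  ultimately have "norm (p - z)^2 + 2 * lam * inner vb (p - xb) - lam * r * norm (p - xb)^2 \<le> norm (xb - z)^2"
    by linarith
  moreover have "lam * r * norm (p - xb)^2 \<le> 1/2 * norm (p - xb)^2"
    using lam(3) by (intro mult_right_mono) auto
  ultimately have "norm (p - c)^2 \<le> \<rho>^2 + norm (p - xb)^2 / 2"
    using norm_power2_shift[of p z lam vb xb] \<rho>c by (simp add: c_def)
  moreover have "norm (p - xb) \<le> norm (p - c) + \<rho>"
    using norm_triangle_ineq[of "p - c" "c - xb"] \<rho>c by (simp add: norm_minus_commute)
  ultimately show "norm (p - (z - lam *\<^sub>R vb)) \<le> 3 * \<rho>"
    unfolding c_def[symmetric] by (intro le_three_times_if_power2_le) (auto simp: \<rho>_def)
qed

lemma prox_pair_in_loc_graph: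
  assumes z: "norm (z - (xb + lam *\<^sub>R vb)) < lam * rad / 4" and prox: "prox_point lam \<phi> z p"
  shows "(p, (1/lam) *\<^sub>R (z - p)) \<in> loc_graph"
proof -
  define \<rho> where "\<rho> = norm (z - (xb + lam *\<^sub>R vb))"
  have "lam * rad / 4 \<le> lam" using rad lam(1) by simp
  then have loc: "norm (p - (z - lam *\<^sub>R vb)) \<le> 3 * \<rho>"
    and bound: "\<phi> p + ereal (norm (p - z)^2 / (2*lam)) \<le> ereal (fx + lam * (norm vb + 1)^2 / 2)"
    using prox_point_localized[OF _ prox] z by (auto simp: \<rho>_def)
  have "norm (p - xb) \<le> norm (p - (z - lam *\<^sub>R vb)) + \<rho>"
    using norm_triangle_ineq[of "p - (z - lam *\<^sub>R vb)" "z - (xb + lam *\<^sub>R vb)"] by (simp add: \<rho>_def algebra_simps)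
  moreover have "lam * rad \<le> rad" using rad lam by (intro mult_left_le_one_le) auto
  ultimately have px: "norm (p - xb) < rad" using loc z by (simp add: \<rho>_def)
  have "(1/lam) *\<^sub>R (z - p) - vb = (1/lam) *\<^sub>R ((z - lam *\<^sub>R vb) - p)" using lam(1) by (simp add: algebra_simps)
  then have "norm ((1/lam) *\<^sub>R (z - p) - vb) = norm (p - (z - lam *\<^sub>R vb)) / lam"
    using lam(1) by (simp add: norm_minus_commute)
  also have "\<dots> < rad"
  proof -
    have "norm (p - (z - lam *\<^sub>R vb)) < lam * rad"
      using loc z norm_ge_zero[of "z - (xb + lam *\<^sub>R vb)"] unfolding \<rho>_def by linarith
    then show ?thesis using lam(1) by (simp add: pos_divide_less_eq mult.commute)
  qed
  finally have ps: "norm ((1/lam) *\<^sub>R (z - p) - vb) < rad" .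
  have "norm (p - z)^2 / (2*lam) \<ge> 0" using lam(1) by simp
  then have "\<phi> p \<le> ereal (fx + lam * (norm vb + 1)^2 / 2)"
    using bound by (meson ereal_le_add_self order_trans ereal_less_eq(5))
  also have "\<dots> < ereal (fx + \<epsilon>v)"
  proof -
    have "fx + lam * (norm vb + 1)^2 / 2 < fx + \<epsilon>v" using lam(5) level(1) by linarith
    then show ?thesis by simp
  qed
  finally have lev: "\<phi> p < ereal (fx + \<epsilon>v)" .
  obtain a where "\<phi> p = ereal a" using lev not_minf_near[of p] px rad by (cases "\<phi> p") auto
  then have "(1/lam) *\<^sub>R (z - p) \<in> lim_subdiff \<phi> p" by (rule prox_point_imp_lim_subdiff[OF lam(1) _ prox])
  then show ?thesis using px ps lev by (simp add: loc_graph_def)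
qed

lemma minorant_subgradient_global:
  assumes U: "open U" "convex U" "x \<in> U" and v: "v \<in> lim_subdiff (restr U minorant) x"
  shows "minorant_real y \<ge> minorant_real x + inner v (y - x)"
proof -
  have "econvex_on UNIV (restr U minorant)"
    by (rule econvex_on_UNIV_restr[OF econvex_on_subset[OF minorant_convex subset_UNIV U(2)]])
  then obtain a where a: "restr U minorant x = ereal a" "\<And>y. restr U minorant y \<ge> ereal (a + inner v (y - x))"
    using lim_subdiff_convex_minorant v by blast
  have "minorant_real y \<ge> minorant_real x + inner v (y - x)" if "y \<in> U" for y
    using a(1) a(2)[of y] that U(3) by (simp add: restr_def minorant_eq_real)
  then show ?thesis by (rule convex_on_local_subgradient_imp_subgradient[OF convex_on_minorant_real U(1) subset_UNIV U(3) _ UNIV_I])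
qed

definition inner_rad :: real where
  "inner_rad = lam * rad / 8"

lemma inner_rad: "0 < inner_rad" "inner_rad \<le> rad"
proof -
  show "0 < inner_rad" using lam(1) rad(1) by (simp add: inner_rad_def)
  have "lam * rad \<le> rad" using lam rad by (intro mult_left_le_one_le) auto
  then show "inner_rad \<le> rad" using rad(1) by (simp add: inner_rad_def)
qed

text \<open>The prox point p of z = x + lam v lies on the localized graph, and monotonicity of the
  subgradients of the convex minorant at x and p forces p = x.\<close>
lemma loc_graph_if_minorant_subgradient:
  assumes x: "norm (x - xb) < inner_rad" and v: "norm (v - vb) < inner_rad"
    and vsub: "v \<in> lim_subdiff (restr (ball xb inner_rad) minorant) x"
  shows "(x, v) \<in> loc_graph"
proof -
  define z where "z = x + lam *\<^sub>R v"
  have "norm (z - (xb + lam *\<^sub>R vb)) \<le> norm (x - xb) + norm (lam *\<^sub>R (v - vb))"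
    using norm_triangle_ineq[of "x - xb" "lam *\<^sub>R (v - vb)"] by (simp add: z_def algebra_simps)
  moreover have "norm (lam *\<^sub>R (v - vb)) \<le> norm (v - vb)"
    using lam by (simp add: mult_left_le_one_le)
  ultimately have z: "norm (z - (xb + lam *\<^sub>R vb)) < lam * rad / 4"
    using x v unfolding inner_rad_def by linarith
  have "lam * rad \<le> rad" using lam rad by (intro mult_left_le_one_le) auto
  then have "lam * rad / 4 \<le> \<kappa>/2" using rad by linarith
  have ball: "ball z (\<kappa>/2) \<subseteq> ball (xb + lam *\<^sub>R vb) \<kappa>"
  proof
    fix y assume "y \<in> ball z (\<kappa>/2)"
    then have "norm (y - z) < \<kappa>/2" by (simp add: dist_norm norm_minus_commute)
    moreover have "norm (y - (xb + lam *\<^sub>R vb)) \<le> norm (y - z) + norm (z - (xb + lam *\<^sub>R vb))"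
      using norm_triangle_ineq[of "y - z" "z - (xb + lam *\<^sub>R vb)"] by (simp add: algebra_simps)
    ultimately have "norm (y - (xb + lam *\<^sub>R vb)) < \<kappa>"
      using z \<open>lam * rad / 4 \<le> \<kappa>/2\<close> by linarith
    then show "y \<in> ball (xb + lam *\<^sub>R vb) \<kappa>" by (simp add: dist_norm norm_minus_commute)
  qed
  have cv: "convex_on (ball z (\<kappa>/2)) env_real" by (rule convex_on_subset[OF convex_on_env_real ball convex_ball])
  have env: "moreau_env lam \<phi> y = ereal (env_real y)" if "y \<in> ball z (\<kappa>/2)" for y
    using moreau_env_env_real ball that by blast
  have "\<kappa>/2 > 0" using kappa by simp
  then obtain p where p: "\<bar>\<phi> p\<bar> \<noteq> \<infinity>" "prox_point lam \<phi> z p"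
    by (rule prox_point_exists_if_moreau_env_convex[OF lsc lam(1) _ cv env])
  define ps where "ps = (1/lam) *\<^sub>R (z - p)"
  have A: "(p, ps) \<in> loc_graph" unfolding ps_def by (rule prox_pair_in_loc_graph[OF z p(2)])
  have "minorant_real x \<ge> real_of_ereal (\<phi> p) + inner ps (x - p)" using minorant_upper[OF A, of x] minorant_eq_real by simp
  moreover have "minorant_real p = real_of_ereal (\<phi> p)" using minorant_eq[OF A] by (simp add: minorant_real_def)
  moreover have "minorant_real p \<ge> minorant_real x + inner v (p - x)"
    using x by (intro minorant_subgradient_global[OF open_ball convex_ball _ vsub]) (simp add: dist_norm norm_minus_commute)
  ultimately have "inner (v - ps) (p - x) \<le> 0" by (simp add: inner_diff_left inner_diff_right inner_commute)
  moreover have "v - ps = (1/lam) *\<^sub>R (p - x)" using lam(1) by (simp add: ps_def z_def algebra_simps)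
  ultimately have "norm (p - x)^2 / lam \<le> 0" by (simp add: power2_norm_eq_inner)
  then have "p = x" using lam(1) by (simp add: divide_le_0_iff)
  then have "ps = v" using lam(1) by (simp add: ps_def z_def)
  then show ?thesis using A \<open>p = x\<close> by simp
qed

lemma minorant_subgradient_if_loc_graph:
  assumes A: "(x, v) \<in> loc_graph" and U: "open U" "x \<in> U"
  shows "v \<in> lim_subdiff (restr U minorant) x"
proof -
  have val: "restr U minorant x = ereal (real_of_ereal (\<phi> x))"
    using minorant_eq[OF A] loc_graph_real[OF A] U(2) by (simp add: restr_def)
  have "\<forall>y\<in>U. ereal (real_of_ereal (\<phi> x) + inner v (y - x) - 0 * norm (y - x)^2) \<le> restr U minorant y"
    using minorant_upper[OF A] by (simp add: restr_def)
  then show ?thesis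
    by (intro eps_subdiff_zero_imp_lim_subdiff
        eps_subdiff_zero_if_quadratic_minorant[where f="restr U minorant" and x=x and c=0, OF val U]) auto
qed

lemma var_convex: "var_convex \<phi> xb vb"
proof -
  define U where "U = ball xb inner_rad"
  define V where "V = ball vb inner_rad"
  have UV: "open U" "convex U" "xb \<in> U" "open V" "convex V" "vb \<in> V"
    using inner_rad by (auto simp: U_def V_def)
  have near: "norm (x - xb) < rad" if "x \<in> U" for x
    using that inner_rad by (simp add: U_def dist_norm norm_minus_commute)
  have inA: "(x, v) \<in> loc_graph" if "x \<in> U" "\<phi> x < \<phi> xb + ereal \<epsilon>v" "v \<in> V" "v \<in> lim_subdiff \<phi> x" for x v
    using that near inner_rad base by (auto simp: loc_graph_def V_def dist_norm norm_minus_commute)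
  have EQ: "(x \<in> U \<and> \<phi> x < \<phi> xb + ereal \<epsilon>v \<and> v \<in> V \<and> v \<in> lim_subdiff \<phi> x)
      \<longleftrightarrow> (x \<in> U \<and> v \<in> V \<and> v \<in> lim_subdiff (restr U minorant) x)" for x v
  proof (rule iffI)
    assume "x \<in> U \<and> \<phi> x < \<phi> xb + ereal \<epsilon>v \<and> v \<in> V \<and> v \<in> lim_subdiff \<phi> x"
    then show "x \<in> U \<and> v \<in> V \<and> v \<in> lim_subdiff (restr U minorant) x"
      using inA minorant_subgradient_if_loc_graph UV(1) by blast
  next
    assume "x \<in> U \<and> v \<in> V \<and> v \<in> lim_subdiff (restr U minorant) x"
    then have "(x, v) \<in> loc_graph"
      by (intro loc_graph_if_minorant_subgradient) (auto simp: U_def V_def dist_norm norm_minus_commute)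
    then show "x \<in> U \<and> \<phi> x < \<phi> xb + ereal \<epsilon>v \<and> v \<in> V \<and> v \<in> lim_subdiff \<phi> x"
      using \<open>x \<in> U \<and> v \<in> V \<and> _\<close> base by (simp add: loc_graph_def)
  qed
  have econv: "econvex_on U minorant" by (rule econvex_on_subset[OF minorant_convex subset_UNIV UV(2)])
  have lscU: "\<forall>x\<in>U. lsc_pt (restr U minorant) x"
    unfolding minorant_def using sup_affine_lsc[OF UV(1)] by blast
  have leU: "\<forall>x\<in>U. minorant x \<le> \<phi> x" using minorant_le near by blast
  have "\<phi> x = minorant x" if "x \<in> U" "\<phi> x < \<phi> xb + ereal \<epsilon>v" "v \<in> V" "v \<in> lim_subdiff \<phi> x" for x v
    using minorant_eq[OF inA[OF that]] by simp
  then have EQ2: "\<forall>x v. x \<in> U \<and> \<phi> x < \<phi> xb + ereal \<epsilon>v \<and> v \<in> V \<and> v \<in> lim_subdiff \<phi> x \<longrightarrow> \<phi> x = minorant x"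
    by blast
  have EQ': "\<forall>x v. (x \<in> U \<and> \<phi> x < \<phi> xb + ereal \<epsilon>v \<and> v \<in> V \<and> v \<in> lim_subdiff \<phi> x)
      \<longleftrightarrow> (x \<in> U \<and> v \<in> V \<and> v \<in> lim_subdiff (restr U minorant) x)"
    using EQ by blast
  show ?thesis unfolding var_convex_def
    using UV level(1) econv lscU leU EQ' EQ2
    by (intro exI[of _ U] exI[of _ V] exI[of _ minorant] exI[of _ \<epsilon>v] conjI) assumption+
qed

end

lemma prox_regular_env_convex_imp_var_convex:
  fixes \<phi> :: "'a::{real_inner,complete_space} \<Rightarrow> ereal"
  assumes lsc: "lsc_fun \<phi>" and pb: "prox_bounded \<phi>" and fx: "\<phi> xb = ereal fx"
    and sub: "vb \<in> lim_subdiff \<phi> xb" and pr: "prox_regular \<phi> xb vb" and "lam0 > 0"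
    and lc: "\<And>lam. 0 < lam \<Longrightarrow> lam < lam0 \<Longrightarrow> locally_convex_around (moreau_env lam \<phi>) (xb + lam *\<^sub>R vb)"
  shows "var_convex \<phi> xb vb"
proof -
  obtain \<epsilon>0 r where eps: "\<epsilon>0 > 0" "r \<ge> 0" and PR: "\<forall>x u us. norm (x - xb) \<le> \<epsilon>0 \<and> us \<in> lim_subdiff \<phi> u \<and>
        norm (u - xb) \<le> \<epsilon>0 \<and> norm (us - vb) \<le> \<epsilon>0 \<and> \<phi> u < \<phi> xb + ereal \<epsilon>0
        \<longrightarrow> \<phi> x \<ge> \<phi> u + ereal (inner us (x - u)) - ereal (r / 2 * norm (x - u) ^ 2)"
    using pr unfolding prox_regular_def by blast
  define \<epsilon>v where "\<epsilon>v = min \<epsilon>0 1 / 2"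
  define L where "L = norm vb + 1"
  have L: "L \<ge> 1" by (simp add: L_def)
  obtain l where "l > 0" and far: "\<And>lam z w. 0 < lam \<Longrightarrow> lam < l \<Longrightarrow> norm (z - xb) \<le> \<epsilon>0/2 \<Longrightarrow>
      norm (w - xb) \<ge> \<epsilon>0 \<Longrightarrow> ereal (fx + 1 + L^2/2) \<le> \<phi> w + ereal (norm (w - z)^2 / (2*lam))"
    using prox_bounded_far_bound[OF pb eps(1)] by blast
  define lam where "lam = Min {lam0/2, l/2, 1, 1/(2*r + 1), \<epsilon>0/(4*L), \<epsilon>v/(L^2 + 1)}"
  have "lam > 0" unfolding lam_def
    using \<open>lam0 > 0\<close> \<open>l > 0\<close> eps L by (subst Min_gr_iff) (auto simp: \<epsilon>v_def add_pos_nonneg)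
  have lam_le: "lam \<le> lam0/2" "lam \<le> l/2" "lam \<le> 1" "lam \<le> 1/(2*r + 1)" "lam \<le> \<epsilon>0/(4*L)" "lam \<le> \<epsilon>v/(L^2 + 1)"
    unfolding lam_def by (rule Min_le; simp)+
  have "lam * (2*r + 1) \<le> 1" using lam_le(4) eps by (simp add: pos_le_divide_eq add_pos_nonneg)
  then have lam_r: "lam * r \<le> 1/2" using \<open>lam > 0\<close> by (simp add: algebra_simps)
  have lam_L: "lam * L \<le> \<epsilon>0/4" using lam_le(5) L by (simp add: pos_le_divide_eq algebra_simps)
  have "0 < L^2 + 1" using zero_le_power2[of L] by linarith
  then have "lam * (L^2 + 1) \<le> \<epsilon>v" using lam_le(6) by (simp only: pos_le_divide_eq)
  then have lam_L2: "lam * L^2 < \<epsilon>v" using \<open>lam > 0\<close> by (simp add: algebra_simps)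
  obtain W where W: "open W" "convex W" "xb + lam *\<^sub>R vb \<in> W" "econvex_on W (moreau_env lam \<phi>)"
    using lc[OF \<open>lam > 0\<close>] lam_le(1) \<open>lam0 > 0\<close> unfolding locally_convex_around_def by auto
  obtain \<kappa>0 where "\<kappa>0 > 0" "ball (xb + lam *\<^sub>R vb) \<kappa>0 \<subseteq> W" using W open_contains_ball by blast
  define \<kappa> where "\<kappa> = min \<kappa>0 (\<epsilon>0/4)"
  have "econvex_on (ball (xb + lam *\<^sub>R vb) \<kappa>) (moreau_env lam \<phi>)"
  proof (rule econvex_on_subset[OF W(4)])
    show "ball (xb + lam *\<^sub>R vb) \<kappa> \<subseteq> W" using \<open>ball _ \<kappa>0 \<subseteq> W\<close> by (auto simp: \<kappa>_def)
  qed simp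
  then interpret prox_regular_env_convex \<phi> xb vb fx \<epsilon>0 r \<epsilon>v "fx + 1 + L^2/2" lam \<kappa>
    using lsc fx sub eps PR far[of lam] \<open>lam > 0\<close> lam_le \<open>l > 0\<close> \<open>\<kappa>0 > 0\<close> lam_r lam_L lam_L2
    by unfold_locales (auto simp: \<epsilon>v_def L_def \<kappa>_def)
  show ?thesis by (rule var_convex)
qed

theorem corollary4p8:
  fixes \<phi> :: "'a::{real_inner, complete_space} \<Rightarrow> ereal"
    and xb vb :: 'a
  assumes nonneginf: "\<forall>x. \<phi> x \<noteq> -\<infinity>"
    and lsc: "lsc_fun \<phi>"
    and pb: "prox_bounded \<phi>"
    and dom: "xb \<in> edom \<phi>"
    and sub: "vb \<in> lim_subdiff \<phi> xb"
  shows "(var_convex \<phi> xb vb \<longrightarrow>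
            (prox_regular \<phi> xb vb \<and>
             (\<exists>lam0>0. \<forall>lam. 0 < lam \<and> lam < lam0 \<longrightarrow>
                 locally_convex_around (moreau_env lam \<phi>) (xb + lam *\<^sub>R vb))))
       \<and> (weakly_seq_lsc_around \<phi> xb \<longrightarrow>
            (prox_regular \<phi> xb vb \<and>
             (\<exists>lam0>0. \<forall>lam. 0 < lam \<and> lam < lam0 \<longrightarrow>
                 locally_convex_around (moreau_env lam \<phi>) (xb + lam *\<^sub>R vb)))
            \<longrightarrow> var_convex \<phi> xb vb)"
proof -
  obtain fx where fx: "\<phi> xb = ereal fx" using dom nonneginf unfolding edom_def by (cases "\<phi> xb") auto
  have "prox_regular \<phi> xb vb \<and> (\<exists>lam0>0. \<forall>lam. 0 < lam \<and> lam < lam0 \<longrightarrow>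
      locally_convex_around (moreau_env lam \<phi>) (xb + lam *\<^sub>R vb))" if vc: "var_convex \<phi> xb vb"
  proof -
    obtain \<psi> \<delta> where "var_convex_witness \<phi> \<psi> xb vb fx \<delta>"
      using var_convex_imp_witness[OF vc sub fx] by blast
    then interpret var_convex_witness \<phi> \<psi> xb vb fx \<delta> .
    show ?thesis using prox_regular moreau_env_locally_convex[OF pb] by blast
  qed
  moreover
  have "var_convex \<phi> xb vb" if "prox_regular \<phi> xb vb \<and> (\<exists>lam0>0. \<forall>lam. 0 < lam \<and> lam < lam0 \<longrightarrow>
      locally_convex_around (moreau_env lam \<phi>) (xb + lam *\<^sub>R vb))"
    using that prox_regular_env_convex_imp_var_convex[OF lsc pb fx sub] by blast
  ultimately show ?thesis by blast
qed

end
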